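(* Let $A$ be a basic connected finite dimensional algebra over an algebraically closed field $k$ with ordinary quiver $Q$ without oriented cycles. Let $\nu\colon kQ\twoheadrightarrow A$ be a presentation, $\varphi_{\alpha,u,\tau}$ a transvection of $kQ$, and $\mu:=\nu\circ\varphi_{\alpha,u,\tau}$. Set $I=\mathsf{Ker}(\nu)$, $J=\mathsf{Ker}(\mu)$ (so $I=\varphi_{\alpha,u,\tau}(J)$). Suppose $\alpha\sim_J u$, and let $p\colon\pi_1(Q,I)\twoheadrightarrow\pi_1(Q,J)$, $[\gamma]_I\mapsto[\gamma]_J$, be the surjective group homomorphism induced by the identity on walks. Then $\theta_\mu=\theta_\nu\circ p^*$, where $p^*\colon\mathsf{Hom}(\pi_1(Q,J),k^+)\hookrightarrow\mathsf{Hom}(\pi_1(Q,I),k^+)$, $f\mapsto f\circ p$. In particular $\mathsf{Im}(\theta_\mu)\subseteq\mathsf{Im}(\theta_\nu)$.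
   Context: Fix a complete set $e_1,\dots,e_n$ of primitive orthogonal idempotents of $A$ indexed by $Q_0=\{1,\dots,n\}$, $E=\bigoplus ke_i$. A presentation is a surjective algebra map $\nu\colon kQ\twoheadrightarrow A$ with admissible kernel ($(kQ^+)^N\subseteq\mathsf{Ker}\,\nu\subseteq(kQ^+)^2$ for some $N\ge2$, $kQ^+$ the arrow ideal) and $\nu(e_i)=e_i$. A bypass is a pair $(\alpha,u)$ with $\alpha$ an arrow and $u$ an oriented path parallel to and distinct from $\alpha$; for $\tau\in k$ the transvection $\varphi_{\alpha,u,\tau}$ is the automorphism of $kQ$ fixing all $e_i$ and all arrows other than $\alpha$ and mapping $\alpha$ to $\alpha+\tau u$. Walks: paths with formal inverse arrows allowed. $\sim_I$ is the smallest equivalence relation on walks with $\alpha\alpha^{-1}\sim_I e_y$, $\alpha^{-1}\alpha\sim_I e_x$ for arrows $\alpha\colon x\to y$, compatible with concatenation, and identifying two paths occurring with nonzero coefficient in a same minimal relation of $I$ (a nonzero $\sum t_iu_i\in I$, $t_i\neq0$, distinct paths, no nonempty proper subsum in $I$). $\pi_1(Q,I)$ is the group of classes of closed walks at a fixed vertex $x_0$. It is known that under the hypothesis $\alpha\sim_J u$ the relation $\sim_I$ is finer than $\sim_J$, so $p$ is well defined and surjective. $\mathsf{HH}^1(A)=Der_0(A)/Int_0(A)$, with $Der_0(A)$ the derivations vanishing on all $e_i$ and $Int_0(A)=\{a\mapsto ea-ae\mid e\in E\}$. Fix a maximal tree $T$ of $Q$, $\gamma_x$ the minimal walk in $T$ from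 $x_0$ to $x$. For a presentation $\nu$ with kernel $I$ and group homomorphism $f\colon\pi_1(Q,I)\to k^+$, $\theta_\nu(f)$ is the class of the derivation $\tilde f$ with $\tilde f(\nu(u))=f([\gamma_y^{-1}u\gamma_x]_I)\nu(u)$ for paths $u$ from $x$ to $y$. *)

theory Defs
  imports "HOL-Computational_Algebra.Polynomial" "HOL-Algebra.Group"
begin

definition alg_closed :: "'k::field itself \<Rightarrow> bool" where
  "alg_closed _ \<longleftrightarrow> (\<forall>p::'k poly. degree p \<ge> 1 \<longrightarrow> (\<exists>x. poly p x = 0))"

definition k_algebra :: "('k::field \<Rightarrow> 'a::ring_1 \<Rightarrow> 'a) \<Rightarrow> bool" where
  "k_algebra sm \<longleftrightarrow> vector_space sm \<and>
     (\<forall>c a b. sm c (a * b) = sm c a * b \<and> sm c (a * b) = a * sm c b)"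

record ('v, 'e) quiver =
  verts :: "'v set"
  arrs :: "'e set"
  src :: "'e \<Rightarrow> 'v"
  tgt :: "'e \<Rightarrow> 'v"

definition finite_quiver :: "('v, 'e) quiver \<Rightarrow> bool" where
  "finite_quiver Q \<longleftrightarrow> finite (verts Q) \<and> finite (arrs Q) \<and>
     (\<forall>b\<in>arrs Q. src Q b \<in> verts Q \<and> tgt Q b \<in> verts Q)"

text \<open>A walk is a start vertex plus a list of steps in travel order;
  a step (b, True) traverses the arrow b, a step (b, False) traverses its formal inverse.\<close>
fun step_src :: "('v, 'e) quiver \<Rightarrow> 'e \<times> bool \<Rightarrow> 'v" where
  "step_src Q (b, d) = (if d then src Q b else tgt Q b)"

fun step_tgt :: "('v, 'e) quiver \<Rightarrow> 'e \<times> bool \<Rightarrow> 'v" where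
  "step_tgt Q (b, d) = (if d then tgt Q b else src Q b)"

fun walk_chain :: "('v, 'e) quiver \<Rightarrow> 'e set \<Rightarrow> 'v \<Rightarrow> ('e \<times> bool) list \<Rightarrow> bool" where
  "walk_chain Q T x [] = True"
| "walk_chain Q T x (s # ss) =
     (fst s \<in> T \<and> step_src Q s = x \<and> walk_chain Q T (step_tgt Q s) ss)"

fun walk_end_aux :: "('v, 'e) quiver \<Rightarrow> 'v \<Rightarrow> ('e \<times> bool) list \<Rightarrow> 'v" where
  "walk_end_aux Q x [] = x"
| "walk_end_aux Q x (s # ss) = walk_end_aux Q (step_tgt Q s) ss"

definition is_walk_in :: "('v, 'e) quiver \<Rightarrow> 'e set \<Rightarrow> 'v \<times> ('e \<times> bool) list \<Rightarrow> bool" where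
  "is_walk_in Q T w \<longleftrightarrow> fst w \<in> verts Q \<and> walk_chain Q T (fst w) (snd w)"

definition is_walk :: "('v, 'e) quiver \<Rightarrow> 'v \<times> ('e \<times> bool) list \<Rightarrow> bool" where
  "is_walk Q w \<longleftrightarrow> is_walk_in Q (arrs Q) w"

definition wend :: "('v, 'e) quiver \<Rightarrow> 'v \<times> ('e \<times> bool) list \<Rightarrow> 'v" where
  "wend Q w = walk_end_aux Q (fst w) (snd w)"

definition wconc :: "'v \<times> ('e \<times> bool) list \<Rightarrow> 'v \<times> ('e \<times> bool) list \<Rightarrow> 'v \<times> ('e \<times> bool) list" where
  "wconc w v = (fst w, snd w @ snd v)"

definition winv :: "('v, 'e) quiver \<Rightarrow> 'v \<times> ('e \<times> bool) list \<Rightarrow> 'v \<times> ('e \<times> bool) list" where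
  "winv Q w = (wend Q w, rev (map (\<lambda>(b, d). (b, \<not> d)) (snd w)))"

text \<open>Paths: start vertex plus list of arrows in travel order; (x, []) is the trivial path e_x.\<close>
definition pwalk :: "'v \<times> 'e list \<Rightarrow> 'v \<times> ('e \<times> bool) list" where
  "pwalk p = (fst p, map (\<lambda>b. (b, True)) (snd p))"

definition is_path :: "('v, 'e) quiver \<Rightarrow> 'v \<times> 'e list \<Rightarrow> bool" where
  "is_path Q p \<longleftrightarrow> is_walk Q (pwalk p)"

definition pend :: "('v, 'e) quiver \<Rightarrow> 'v \<times> 'e list \<Rightarrow> 'v" where
  "pend Q p = wend Q (pwalk p)"

definition arrow_path :: "('v, 'e) quiver \<Rightarrow> 'e \<Rightarrow> 'v \<times> 'e list" where
  "arrow_path Q b = (src Q b, [b])"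

definition no_oriented_cycles :: "('v, 'e) quiver \<Rightarrow> bool" where
  "no_oriented_cycles Q \<longleftrightarrow> (\<forall>p. is_path Q p \<and> snd p \<noteq> [] \<longrightarrow> pend Q p \<noteq> fst p)"

definition quiver_connected :: "('v, 'e) quiver \<Rightarrow> bool" where
  "quiver_connected Q \<longleftrightarrow> verts Q \<noteq> {} \<and>
     (\<forall>x\<in>verts Q. \<forall>y\<in>verts Q. \<exists>w. is_walk Q w \<and> fst w = x \<and> wend Q w = y)"

definition reduced_walk :: "'v \<times> ('e \<times> bool) list \<Rightarrow> bool" where
  "reduced_walk w \<longleftrightarrow> (\<forall>i. Suc i < length (snd w) \<longrightarrow>
     \<not> (fst (snd w ! i) = fst (snd w ! Suc i) \<and> snd (snd w ! i) \<noteq> snd (snd w ! Suc i)))"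

text \<open>A maximal tree of a connected quiver: a spanning, connected, acyclic set of arrows.\<close>
definition spanning_tree :: "('v, 'e) quiver \<Rightarrow> 'e set \<Rightarrow> bool" where
  "spanning_tree Q T \<longleftrightarrow> T \<subseteq> arrs Q \<and>
     (\<forall>x\<in>verts Q. \<forall>y\<in>verts Q. \<exists>w. is_walk_in Q T w \<and> fst w = x \<and> wend Q w = y) \<and>
     \<not> (\<exists>w. is_walk_in Q T w \<and> wend Q w = fst w \<and> snd w \<noteq> [] \<and> reduced_walk w)"

definition tree_walks :: "('v, 'e) quiver \<Rightarrow> 'v \<Rightarrow> ('v \<Rightarrow> 'v \<times> ('e \<times> bool) list) \<Rightarrow> bool" where
  "tree_walks Q x0 \<gamma> \<longleftrightarrow> (\<exists>T. spanning_tree Q T \<and>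
     (\<forall>x\<in>verts Q. is_walk_in Q T (\<gamma> x) \<and> fst (\<gamma> x) = x0 \<and> wend Q (\<gamma> x) = x \<and>
        (\<forall>w. is_walk_in Q T w \<and> fst w = x0 \<and> wend Q w = x \<longrightarrow>
              length (snd (\<gamma> x)) \<le> length (snd w))))"

text \<open>Elements of kQ: finitely supported k-valued functions on paths of Q.\<close>
definition kQ :: "('v, 'e) quiver \<Rightarrow> ('v \<times> 'e list \<Rightarrow> 'k::field) set" where
  "kQ Q = {f. (\<forall>p. f p \<noteq> 0 \<longrightarrow> is_path Q p) \<and> finite {p. f p \<noteq> 0}}"

definition bp :: "'v \<times> 'e list \<Rightarrow> 'v \<times> 'e list \<Rightarrow> 'k::field" where
  "bp p = (\<lambda>w. if w = p then 1 else 0)"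

definition kq_add :: "('v \<times> 'e list \<Rightarrow> 'k::field) \<Rightarrow> ('v \<times> 'e list \<Rightarrow> 'k) \<Rightarrow> 'v \<times> 'e list \<Rightarrow> 'k" where
  "kq_add f g = (\<lambda>w. f w + g w)"

definition kq_smult :: "'k::field \<Rightarrow> ('v \<times> 'e list \<Rightarrow> 'k) \<Rightarrow> 'v \<times> 'e list \<Rightarrow> 'k" where
  "kq_smult c f = (\<lambda>w. c * f w)"

text \<open>pcomp v u is the paper's product vu: first u, then v.\<close>
definition pcomp :: "'v \<times> 'e list \<Rightarrow> 'v \<times> 'e list \<Rightarrow> 'v \<times> 'e list" where
  "pcomp v u = (fst u, snd u @ snd v)"

definition kq_mult :: "('v, 'e) quiver \<Rightarrow> ('v \<times> 'e list \<Rightarrow> 'k::field) \<Rightarrow> ('v \<times> 'e list \<Rightarrow> 'k)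
    \<Rightarrow> 'v \<times> 'e list \<Rightarrow> 'k" where
  "kq_mult Q f g = (\<lambda>w. \<Sum>(v, u)\<in>{(v, u). is_path Q v \<and> is_path Q u \<and> fst v = pend Q u \<and> pcomp v u = w}.
      f v * g u)"

definition kq_one :: "('v, 'e) quiver \<Rightarrow> 'v \<times> 'e list \<Rightarrow> 'k::field" where
  "kq_one Q = (\<lambda>w. if fst w \<in> verts Q \<and> snd w = [] then 1 else 0)"

text \<open>(kQ^+)^N: the span of the paths of length at least N.\<close>
definition arrow_pow :: "('v, 'e) quiver \<Rightarrow> nat \<Rightarrow> ('v \<times> 'e list \<Rightarrow> 'k::field) set" where
  "arrow_pow Q N = {f \<in> kQ Q. \<forall>p. f p \<noteq> 0 \<longrightarrow> length (snd p) \<ge> N}"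

definition kerP :: "('v, 'e) quiver \<Rightarrow> (('v \<times> 'e list \<Rightarrow> 'k::field) \<Rightarrow> 'a::zero)
    \<Rightarrow> ('v \<times> 'e list \<Rightarrow> 'k) set" where
  "kerP Q \<nu> = {f \<in> kQ Q. \<nu> f = 0}"

text \<open>A presentation: surjective algebra map kQ -> A with admissible kernel, fixing the e_i.\<close>
definition presentation :: "('v, 'e) quiver \<Rightarrow> ('v \<Rightarrow> 'a::ring_1) \<Rightarrow> ('k::field \<Rightarrow> 'a \<Rightarrow> 'a)
    \<Rightarrow> (('v \<times> 'e list \<Rightarrow> 'k) \<Rightarrow> 'a) \<Rightarrow> bool" where
  "presentation Q eA sm \<nu> \<longleftrightarrow>
     (\<forall>f\<in>kQ Q. \<forall>g\<in>kQ Q. \<nu> (kq_add f g) = \<nu> f + \<nu> g \<and> \<nu> (kq_mult Q f g) = \<nu> f * \<nu> g) \<and>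
     (\<forall>c. \<forall>f\<in>kQ Q. \<nu> (kq_smult c f) = sm c (\<nu> f)) \<and>
     \<nu> (kq_one Q) = 1 \<and>
     \<nu> ` kQ Q = UNIV \<and>
     (\<forall>x\<in>verts Q. \<nu> (bp (x, [])) = eA x) \<and>
     (\<exists>N\<ge>2. arrow_pow Q N \<subseteq> kerP Q \<nu> \<and> kerP Q \<nu> \<subseteq> arrow_pow Q 2)"

definition bypass :: "('v, 'e) quiver \<Rightarrow> 'e \<Rightarrow> 'v \<times> 'e list \<Rightarrow> bool" where
  "bypass Q a u \<longleftrightarrow> a \<in> arrs Q \<and> is_path Q u \<and> fst u = src Q a \<and> pend Q u = tgt Q a \<and>
     u \<noteq> arrow_path Q a"

definition phi_arrow :: "('v, 'e) quiver \<Rightarrow> 'e \<Rightarrow> 'v \<times> 'e list \<Rightarrow> 'k::field \<Rightarrow> 'e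
    \<Rightarrow> 'v \<times> 'e list \<Rightarrow> 'k" where
  "phi_arrow Q a u t b = (if b = a then kq_add (bp (arrow_path Q a)) (kq_smult t (bp u))
                          else bp (arrow_path Q b))"

fun phi_list :: "('v, 'e) quiver \<Rightarrow> 'e \<Rightarrow> 'v \<times> 'e list \<Rightarrow> 'k::field \<Rightarrow> 'v \<Rightarrow> 'e list
    \<Rightarrow> 'v \<times> 'e list \<Rightarrow> 'k" where
  "phi_list Q a u t x [] = bp (x, [])"
| "phi_list Q a u t x (b # bs) = kq_mult Q (phi_list Q a u t (tgt Q b) bs) (phi_arrow Q a u t b)"

definition transv :: "('v, 'e) quiver \<Rightarrow> 'e \<Rightarrow> 'v \<times> 'e list \<Rightarrow> 'k::field
    \<Rightarrow> ('v \<times> 'e list \<Rightarrow> 'k) \<Rightarrow> 'v \<times> 'e list \<Rightarrow> 'k" where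
  "transv Q a u t f = (\<lambda>w. \<Sum>p\<in>{p. f p \<noteq> 0}. f p * phi_list Q a u t (fst p) (snd p) w)"

definition minrel :: "('v, 'e) quiver \<Rightarrow> ('v \<times> 'e list \<Rightarrow> 'k::field) set
    \<Rightarrow> ('v \<times> 'e list \<Rightarrow> 'k) \<Rightarrow> bool" where
  "minrel Q I f \<longleftrightarrow> f \<in> I \<and> f \<noteq> (\<lambda>_. 0) \<and>
     (\<forall>S. S \<subseteq> {p. f p \<noteq> 0} \<and> S \<noteq> {} \<and> S \<noteq> {p. f p \<noteq> 0} \<longrightarrow>
          (\<lambda>w. if w \<in> S then f w else 0) \<notin> I)"

inductive wrel :: "('v, 'e) quiver \<Rightarrow> ('v \<times> 'e list \<Rightarrow> 'k::field) set
    \<Rightarrow> 'v \<times> ('e \<times> bool) list \<Rightarrow> 'v \<times> ('e \<times> bool) list \<Rightarrow> bool"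
  for Q :: "('v, 'e) quiver" and I :: "('v \<times> 'e list \<Rightarrow> 'k::field) set" where
  wrel_refl: "is_walk Q w \<Longrightarrow> wrel Q I w w"
| wrel_sym: "wrel Q I w v \<Longrightarrow> wrel Q I v w"
| wrel_trans: "wrel Q I w v \<Longrightarrow> wrel Q I v z \<Longrightarrow> wrel Q I w z"
| wrel_cancel1: "b \<in> arrs Q \<Longrightarrow> wrel Q I (tgt Q b, [(b, False), (b, True)]) (tgt Q b, [])"
| wrel_cancel2: "b \<in> arrs Q \<Longrightarrow> wrel Q I (src Q b, [(b, True), (b, False)]) (src Q b, [])"
| wrel_minrel: "minrel Q I f \<Longrightarrow> f p \<noteq> 0 \<Longrightarrow> f q \<noteq> 0 \<Longrightarrow> wrel Q I (pwalk p) (pwalk q)"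
| wrel_conc: "wrel Q I w w' \<Longrightarrow> wrel Q I v v' \<Longrightarrow> wend Q w = fst v \<Longrightarrow> wend Q w' = fst v' \<Longrightarrow>
     wrel Q I (wconc w v) (wconc w' v')"

definition wclass :: "('v, 'e) quiver \<Rightarrow> ('v \<times> 'e list \<Rightarrow> 'k::field) set
    \<Rightarrow> 'v \<times> ('e \<times> bool) list \<Rightarrow> ('v \<times> ('e \<times> bool) list) set" where
  "wclass Q I w = {v. wrel Q I w v}"

definition pi1 :: "('v, 'e) quiver \<Rightarrow> ('v \<times> 'e list \<Rightarrow> 'k::field) set \<Rightarrow> 'v
    \<Rightarrow> ('v \<times> ('e \<times> bool) list) set monoid" where
  "pi1 Q I x0 = \<lparr>carrier = {wclass Q I w | w. is_walk Q w \<and> fst w = x0 \<and> wend Q w = x0},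
      monoid.mult = (\<lambda>C D. {z. \<exists>w\<in>C. \<exists>v\<in>D. wrel Q I (wconc w v) z}),
      one = wclass Q I (x0, [])\<rparr>"

definition kplus :: "'k::field monoid" where
  "kplus = \<lparr>carrier = UNIV, monoid.mult = (+), one = 0\<rparr>"

definition pmap :: "('v, 'e) quiver \<Rightarrow> ('v \<times> 'e list \<Rightarrow> 'k::field) set
    \<Rightarrow> ('v \<times> ('e \<times> bool) list) set \<Rightarrow> ('v \<times> ('e \<times> bool) list) set" where
  "pmap Q J C = {z. \<exists>w\<in>C. wrel Q J w z}"

definition Der0 :: "('v, 'e) quiver \<Rightarrow> ('v \<Rightarrow> 'a::ring_1) \<Rightarrow> ('k::field \<Rightarrow> 'a \<Rightarrow> 'a)
    \<Rightarrow> ('a \<Rightarrow> 'a) set" where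
  "Der0 Q eA sm = {D. (\<forall>a b. D (a + b) = D a + D b) \<and> (\<forall>c a. D (sm c a) = sm c (D a)) \<and>
       (\<forall>a b. D (a * b) = D a * b + a * D b) \<and> (\<forall>x\<in>verts Q. D (eA x) = 0)}"

definition Eset :: "('v, 'e) quiver \<Rightarrow> ('v \<Rightarrow> 'a::ring_1) \<Rightarrow> ('k::field \<Rightarrow> 'a \<Rightarrow> 'a) \<Rightarrow> 'a set" where
  "Eset Q eA sm = {\<Sum>x\<in>verts Q. sm (c x) (eA x) | c. True}"

definition Int0 :: "('v, 'e) quiver \<Rightarrow> ('v \<Rightarrow> 'a::ring_1) \<Rightarrow> ('k::field \<Rightarrow> 'a \<Rightarrow> 'a)
    \<Rightarrow> ('a \<Rightarrow> 'a) set" where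
  "Int0 Q eA sm = {(\<lambda>a. e * a - a * e) | e. e \<in> Eset Q eA sm}"

text \<open>The class in HH^1(A) = Der0/Int0 of a derivation D, as a set of derivations.\<close>
definition hh1_class :: "('v, 'e) quiver \<Rightarrow> ('v \<Rightarrow> 'a::ring_1) \<Rightarrow> ('k::field \<Rightarrow> 'a \<Rightarrow> 'a)
    \<Rightarrow> ('a \<Rightarrow> 'a) \<Rightarrow> ('a \<Rightarrow> 'a) set" where
  "hh1_class Q eA sm D = {D'. D' \<in> Der0 Q eA sm \<and> (\<lambda>a. D' a - D a) \<in> Int0 Q eA sm}"

definition ftilde :: "('v, 'e) quiver \<Rightarrow> ('v \<Rightarrow> 'a::ring_1) \<Rightarrow> ('k::field \<Rightarrow> 'a \<Rightarrow> 'a)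
    \<Rightarrow> (('v \<times> 'e list \<Rightarrow> 'k) \<Rightarrow> 'a) \<Rightarrow> 'v \<Rightarrow> ('v \<Rightarrow> 'v \<times> ('e \<times> bool) list)
    \<Rightarrow> (('v \<times> ('e \<times> bool) list) set \<Rightarrow> 'k) \<Rightarrow> ('a \<Rightarrow> 'a) \<Rightarrow> bool" where
  "ftilde Q eA sm \<nu> x0 \<gamma> f D \<longleftrightarrow> D \<in> Der0 Q eA sm \<and>
     (\<forall>u. is_path Q u \<longrightarrow>
        D (\<nu> (bp u)) = sm (f (wclass Q (kerP Q \<nu>)
                               (wconc (wconc (\<gamma> (fst u)) (pwalk u)) (winv Q (\<gamma> (pend Q u))))))
                          (\<nu> (bp u)))"

definition theta :: "('v, 'e) quiver \<Rightarrow> ('v \<Rightarrow> 'a::ring_1) \<Rightarrow> ('k::field \<Rightarrow> 'a \<Rightarrow> 'a)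
    \<Rightarrow> (('v \<times> 'e list \<Rightarrow> 'k) \<Rightarrow> 'a) \<Rightarrow> 'v \<Rightarrow> ('v \<Rightarrow> 'v \<times> ('e \<times> bool) list)
    \<Rightarrow> (('v \<times> ('e \<times> bool) list) set \<Rightarrow> 'k) \<Rightarrow> ('a \<Rightarrow> 'a) set" where
  "theta Q eA sm \<nu> x0 \<gamma> f = \<Union>{hh1_class Q eA sm D | D. ftilde Q eA sm \<nu> x0 \<gamma> f D}"

end

theory Submission
  imports Defs
begin

text \<open>
  The transvection \<phi> is unitriangular with respect to the number of occurrences of \<alpha> (the
  bypass u avoids \<alpha>, since Q has no oriented cycles), so it is an automorphism of kQ and
  I = \<phi>(J). As \<alpha> is J-homotopic to u, \<phi> moves every path only within its J-homotopy class.
  Every relation is a sum of minimal relations with disjoint supports, so the part of an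
  element of J supported on a J-homotopy class lies in J; applying \<phi>, the same holds for I.
  Hence minimal relations of I only relate J-homotopic paths, homotopy modulo I is finer than
  homotopy modulo J, and p is a homomorphism.

  For a homomorphism f on the fundamental group modulo J, the weight F(v) = f[\<gamma> v \<gamma>\<inverse>] is
  additive along paths and F(u) = F(\<alpha>). A derivation multiplies the image of every path by
  its weight as soon as it does so on vertices and arrows, and there \<mu> and \<nu> agree except for
  \<mu>(\<alpha>) = \<nu>(\<alpha>) + \<tau> \<nu>(u), which such a derivation scales by the same factor F(\<alpha>).
  So the derivations representing \<theta>(f) for \<mu> and \<theta>(f \<circ> p) for \<nu> are the same.
\<close>

section \<open>Walks and paths\<close>

lemma walk_chain_append:
  "walk_chain Q T x (xs @ ys) \<longleftrightarrow> walk_chain Q T x xs \<and> walk_chain Q T (walk_end_aux Q x xs) ys"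
  by (induction xs arbitrary: x) auto

lemma walk_end_aux_append:
  "walk_end_aux Q x (xs @ ys) = walk_end_aux Q (walk_end_aux Q x xs) ys"
  by (induction xs arbitrary: x) auto

lemma walk_chain_mono: "T \<subseteq> T' \<Longrightarrow> walk_chain Q T x xs \<Longrightarrow> walk_chain Q T' x xs"
  by (induction xs arbitrary: x) auto

lemma walk_end_aux_in_verts:
  assumes "finite_quiver Q" "x \<in> verts Q" "walk_chain Q (arrs Q) x xs"
  shows "walk_end_aux Q x xs \<in> verts Q"
  using assms(2,3)
proof (induction xs arbitrary: x)
  case (Cons s ss)
  then have "step_tgt Q s \<in> verts Q"
    using assms(1) unfolding finite_quiver_def by (cases s) auto
  then show ?case using Cons by simp
qed simp

definition reverse_step :: "'e \<times> bool \<Rightarrow> 'e \<times> bool" where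
  "reverse_step = (\<lambda>(b, d). (b, \<not> d))"

lemma winv_eq: "winv Q w = (wend Q w, rev (map reverse_step (snd w)))"
  unfolding winv_def reverse_step_def by simp

lemma reverse_step_simps [simp]:
  "step_src Q (reverse_step s) = step_tgt Q s" "step_tgt Q (reverse_step s) = step_src Q s"
  "fst (reverse_step s) = fst s"
  by (cases s; simp add: reverse_step_def)+

lemma walk_chain_rev:
  "walk_chain Q T x xs \<Longrightarrow>
     walk_chain Q T (walk_end_aux Q x xs) (rev (map reverse_step xs)) \<and>
     walk_end_aux Q (walk_end_aux Q x xs) (rev (map reverse_step xs)) = x"
  by (induction xs arbitrary: x) (auto simp: walk_chain_append walk_end_aux_append)

lemma is_walk_iff: "is_walk Q w \<longleftrightarrow> fst w \<in> verts Q \<and> walk_chain Q (arrs Q) (fst w) (snd w)"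
  unfolding is_walk_def is_walk_in_def by simp

lemma is_walk_wconc:
  "is_walk Q w \<Longrightarrow> is_walk Q v \<Longrightarrow> wend Q w = fst v \<Longrightarrow> is_walk Q (wconc w v)"
  unfolding is_walk_iff wconc_def wend_def by (simp add: walk_chain_append)

lemma wend_wconc: "wend Q w = fst v \<Longrightarrow> wend Q (wconc w v) = wend Q v"
  unfolding wconc_def wend_def by (simp add: walk_end_aux_append)

lemma fst_wconc [simp]: "fst (wconc w v) = fst w"
  unfolding wconc_def by simp

lemma wconc_Nil [simp]: "wconc w (x, []) = w"
  unfolding wconc_def by simp

lemma is_walk_winv:
  assumes "finite_quiver Q" "is_walk Q w"
  shows "is_walk Q (winv Q w)" "wend Q (winv Q w) = fst w" "fst (winv Q w) = wend Q w"
  using assms walk_chain_rev[of Q "arrs Q" "fst w" "snd w"]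
    walk_end_aux_in_verts[of Q "fst w" "snd w"]
  unfolding is_walk_iff winv_eq wend_def by auto

lemma wrel_concI:
  "wrel Q K w w' \<Longrightarrow> wrel Q K v v' \<Longrightarrow> wend Q w = fst v \<Longrightarrow> wend Q w' = fst v' \<Longrightarrow>
   z = wconc w v \<Longrightarrow> z' = wconc w' v' \<Longrightarrow> wrel Q K z z'"
  using wrel_conc by blast

lemma wrel_reverse_cancel_step:
  assumes "s = (b, d)" "b \<in> arrs Q"
  shows "wrel Q K (step_tgt Q s, [reverse_step s, s]) (step_tgt Q s, [])"
  using assms wrel_cancel1[of b Q K] wrel_cancel2[of b Q K]
  by (cases d) (simp_all add: reverse_step_def)

lemma wrel_reverse_cancel:
  assumes fq: "finite_quiver Q"
  shows "x \<in> verts Q \<Longrightarrow> walk_chain Q (arrs Q) x xs \<Longrightarrow>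
    wrel Q K (walk_end_aux Q x xs, rev (map reverse_step xs) @ xs) (walk_end_aux Q x xs, [])"
proof (induction xs arbitrary: x)
  case Nil
  then show ?case by (simp add: wrel_refl is_walk_iff)
next
  case (Cons s ss)
  obtain b d where s: "s = (b, d)" and b: "b \<in> arrs Q"
    and ch: "walk_chain Q (arrs Q) (step_tgt Q s) ss"
    using Cons.prems by (cases s) auto
  define y where "y = step_tgt Q s"
  define e where "e = walk_end_aux Q y ss"
  define A where "A = (e, rev (map reverse_step ss))"
  have y: "y \<in> verts Q" using b fq s unfolding y_def finite_quiver_def by auto
  have IH: "wrel Q K (e, rev (map reverse_step ss) @ ss) (e, [])"
    using Cons.IH[OF y] ch unfolding e_def y_def by simp
  have "walk_chain Q (arrs Q) e (rev (map reverse_step ss))"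
    and eA: "wend Q A = y"
    using walk_chain_rev[OF ch] unfolding A_def wend_def e_def y_def by simp_all
  moreover have "e \<in> verts Q"
    using walk_end_aux_in_verts[OF fq y] ch unfolding e_def y_def by simp
  ultimately have A: "is_walk Q A" unfolding A_def is_walk_iff by simp
  have B: "is_walk Q (y, ss)" using y ch unfolding is_walk_iff y_def by simp
  have eM: "wend Q (y, [reverse_step s, s]) = y" by (simp add: wend_def y_def)
  have "wrel Q K (wconc A (y, [reverse_step s, s])) A"
    by (rule wrel_concI[OF wrel_refl[OF A] wrel_reverse_cancel_step[OF s b]])
      (auto simp: eA y_def)
  then have "wrel Q K (wconc (wconc A (y, [reverse_step s, s])) (y, ss)) (wconc A (y, ss))"
    by (rule wrel_concI[OF _ wrel_refl[OF B]]) (auto simp: eA eM wend_wconc)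
  then show ?case
    using IH wrel_trans unfolding A_def wconc_def e_def y_def by fastforce
qed

lemma wrel_winv_wconc:
  assumes "finite_quiver Q" "is_walk Q w"
  shows "wrel Q K (wconc (winv Q w) w) (wend Q w, [])"
  using wrel_reverse_cancel[OF assms(1), of "fst w" "snd w" K] assms(2)
  unfolding is_walk_iff winv_eq wconc_def wend_def by simp

definition wrel_parallel :: "('v, 'e) quiver \<Rightarrow> ('v \<times> 'e list \<Rightarrow> 'k::field) set \<Rightarrow> bool" where
  "wrel_parallel Q K \<longleftrightarrow> (\<forall>w v. wrel Q K w v \<longrightarrow>
     is_walk Q w \<and> is_walk Q v \<and> fst w = fst v \<and> wend Q w = wend Q v)"

lemma wrel_parallelD:
  "wrel_parallel Q K \<Longrightarrow> wrel Q K w v \<Longrightarrow>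
     is_walk Q w \<and> is_walk Q v \<and> fst w = fst v \<and> wend Q w = wend Q v"
  unfolding wrel_parallel_def by blast

lemma wrel_parallelI:
  assumes fq: "finite_quiver Q"
    and par: "\<And>f p q. minrel Q K f \<Longrightarrow> f p \<noteq> 0 \<Longrightarrow> f q \<noteq> 0 \<Longrightarrow>
        is_path Q p \<and> is_path Q q \<and> fst p = fst q \<and> pend Q p = pend Q q"
  shows "wrel_parallel Q K"
  unfolding wrel_parallel_def
proof (intro allI impI)
  show "is_walk Q w \<and> is_walk Q v \<and> fst w = fst v \<and> wend Q w = wend Q v" if "wrel Q K w v" for w v
    using that
  proof (induction rule: wrel.induct)
    case (wrel_cancel1 b)
    then show ?case using fq unfolding finite_quiver_def is_walk_iff wend_def by auto
  next
    case (wrel_cancel2 b)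
    then show ?case using fq unfolding finite_quiver_def is_walk_iff wend_def by auto
  next
    case (wrel_minrel f p q)
    then show ?case using par[of f p q] unfolding is_path_def pend_def pwalk_def by auto
  next
    case (wrel_conc w w' v v')
    then show ?case by (auto simp: is_walk_wconc wend_wconc)
  qed auto
qed

lemma pwalk_simps [simp]:
  "fst (pwalk p) = fst p" "snd (pwalk p) = map (\<lambda>b. (b, True)) (snd p)"
  unfolding pwalk_def by auto

lemma is_path_iff:
  "is_path Q p \<longleftrightarrow> fst p \<in> verts Q \<and> walk_chain Q (arrs Q) (fst p) (map (\<lambda>b. (b, True)) (snd p))"
  unfolding is_path_def is_walk_iff by simp

lemma is_path_Nil [simp]: "is_path Q (x, []) \<longleftrightarrow> x \<in> verts Q"
  unfolding is_path_iff by simp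

lemma pend_Nil [simp]: "pend Q (x, []) = x"
  unfolding pend_def wend_def pwalk_def by simp

lemma pend_Cons [simp]: "pend Q (x, b # bs) = pend Q (tgt Q b, bs)"
  unfolding pend_def wend_def pwalk_def by simp

lemma is_path_Cons:
  assumes "finite_quiver Q"
  shows "is_path Q (x, b # bs) \<longleftrightarrow> b \<in> arrs Q \<and> src Q b = x \<and> is_path Q (tgt Q b, bs)"
  using assms unfolding is_path_iff finite_quiver_def by auto

lemma pend_in_verts: "finite_quiver Q \<Longrightarrow> is_path Q p \<Longrightarrow> pend Q p \<in> verts Q"
  unfolding pend_def wend_def is_path_iff using walk_end_aux_in_verts by fastforce

lemma is_path_append:
  assumes "finite_quiver Q"
  shows "is_path Q (x, xs @ ys) \<longleftrightarrow> is_path Q (x, xs) \<and> is_path Q (pend Q (x, xs), ys)"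
  using assms pend_in_verts[OF assms, of "(x, xs)"]
  unfolding is_path_iff pend_def wend_def by (auto simp: walk_chain_append)

lemma pend_append: "pend Q (x, xs @ ys) = pend Q (pend Q (x, xs), ys)"
  unfolding pend_def wend_def by (simp add: walk_end_aux_append)

lemma fst_pcomp [simp]: "fst (pcomp v u) = fst u"
  unfolding pcomp_def by simp

lemma
  assumes "finite_quiver Q" "is_path Q v" "is_path Q u" "fst v = pend Q u"
  shows is_path_pcomp: "is_path Q (pcomp v u)"
    and pend_pcomp: "pend Q (pcomp v u) = pend Q v"
  using assms by (cases u; cases v; simp add: pcomp_def is_path_append pend_append)+

lemma pwalk_pcomp: "pwalk (pcomp v u) = wconc (pwalk u) (pwalk v)"
  unfolding pwalk_def pcomp_def wconc_def by simp

lemma wend_pwalk: "wend Q (pwalk p) = pend Q p"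
  unfolding pend_def by simp

lemma is_walk_pwalk: "is_path Q p \<Longrightarrow> is_walk Q (pwalk p)"
  unfolding is_path_def by simp

lemma arrow_path_props:
  assumes "finite_quiver Q" "b \<in> arrs Q"
  shows "is_path Q (arrow_path Q b)" "fst (arrow_path Q b) = src Q b"
    "pend Q (arrow_path Q b) = tgt Q b"
  using assms unfolding arrow_path_def finite_quiver_def by (auto simp: is_path_Cons[OF assms(1)])

lemma pcomp_arrow_path: "pcomp (tgt Q b, bs) (arrow_path Q b) = (src Q b, b # bs)"
  unfolding pcomp_def arrow_path_def by simp

section \<open>The path algebra\<close>

definition path_splittings :: "('v, 'e) quiver \<Rightarrow> 'v \<times> 'e list \<Rightarrow> (('v \<times> 'e list) \<times> ('v \<times> 'e list)) set"
  where "path_splittings Q w =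
    {(v, u). is_path Q v \<and> is_path Q u \<and> fst v = pend Q u \<and> pcomp v u = w}"

lemma kq_mult_eq_sum: "kq_mult Q f g w = (\<Sum>(v, u)\<in>path_splittings Q w. f v * g u)"
  unfolding kq_mult_def path_splittings_def by simp

lemma finite_path_splittings: "finite (path_splittings Q w)"
proof -
  let ?h = "\<lambda>i. ((pend Q (fst w, take i (snd w)), drop i (snd w)), (fst w, take i (snd w)))"
  have "path_splittings Q w \<subseteq> ?h ` {..length (snd w)}"
  proof
    fix z assume "z \<in> path_splittings Q w"
    then obtain v u where z: "z = (v, u)" and c: "fst v = pend Q u" and w: "pcomp v u = w"
      unfolding path_splittings_def by auto
    have "snd w = snd u @ snd v" "fst w = fst u" using w unfolding pcomp_def by auto
    then have "z = ?h (length (snd u))" using z c by (cases u; cases v; auto)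
    moreover have "length (snd u) \<le> length (snd w)" using \<open>snd w = snd u @ snd v\<close> by simp
    ultimately show "z \<in> ?h ` {..length (snd w)}" by blast
  qed
  then show ?thesis by (rule finite_subset) simp
qed

lemma kq_mult_nonzeroE:
  assumes "kq_mult Q f g w \<noteq> 0"
  obtains v u where "is_path Q v" "is_path Q u" "fst v = pend Q u" "pcomp v u = w"
    "f v \<noteq> 0" "g u \<noteq> 0"
proof -
  from assms have "(\<Sum>(v, u)\<in>path_splittings Q w. f v * g u) \<noteq> 0"
    by (simp add: kq_mult_eq_sum)
  then obtain z where "z \<in> path_splittings Q w" "(case z of (v, u) \<Rightarrow> f v * g u) \<noteq> 0"
    by (rule sum.not_neutral_contains_not_neutral)
  then show ?thesis using that unfolding path_splittings_def by auto
qed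

lemma kQ_finite: "f \<in> kQ Q \<Longrightarrow> finite {p. f p \<noteq> 0}"
  unfolding kQ_def by auto

lemma kQ_path: "f \<in> kQ Q \<Longrightarrow> f p \<noteq> 0 \<Longrightarrow> is_path Q p"
  unfolding kQ_def by blast

lemma kQ_subset_supp:
  "f \<in> kQ Q \<Longrightarrow> {w. g w \<noteq> 0} \<subseteq> {w. f w \<noteq> 0} \<Longrightarrow> g \<in> kQ Q"
  unfolding kQ_def by (auto intro: finite_subset)

lemma zero_kQ: "(\<lambda>w. 0) \<in> kQ Q"
  unfolding kQ_def by simp

lemma bp_apply: "bp p w = (if w = p then 1 else 0)"
  unfolding bp_def by simp

lemma bp_kQ: "is_path Q p \<Longrightarrow> bp p \<in> kQ Q"
  unfolding kQ_def bp_def by auto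

lemma kq_add_kQ: "f \<in> kQ Q \<Longrightarrow> g \<in> kQ Q \<Longrightarrow> kq_add f g \<in> kQ Q"
proof -
  assume "f \<in> kQ Q" "g \<in> kQ Q"
  moreover have "{w. kq_add f g w \<noteq> 0} \<subseteq> {w. f w \<noteq> 0} \<union> {w. g w \<noteq> 0}"
    unfolding kq_add_def by auto
  ultimately show ?thesis unfolding kQ_def kq_add_def by (auto intro: finite_subset)
qed

lemma kq_smult_kQ: "f \<in> kQ Q \<Longrightarrow> kq_smult c f \<in> kQ Q"
  by (erule kQ_subset_supp) (auto simp: kq_smult_def)

lemma kq_mult_kQ:
  assumes fq: "finite_quiver Q" and "f \<in> kQ Q" "g \<in> kQ Q"
  shows "kq_mult Q f g \<in> kQ Q"
proof -
  have "{w. kq_mult Q f g w \<noteq> 0} \<subseteq> (\<lambda>(v, u). pcomp v u) ` ({v. f v \<noteq> 0} \<times> {u. g u \<noteq> 0})"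
    by (force elim: kq_mult_nonzeroE)
  moreover have "finite ((\<lambda>(v, u). pcomp v u) ` ({v. f v \<noteq> 0} \<times> {u. g u \<noteq> 0}))"
    using assms(2,3) by (simp add: kQ_finite)
  moreover have "is_path Q w" if "kq_mult Q f g w \<noteq> 0" for w
    using that by (auto elim!: kq_mult_nonzeroE intro: is_path_pcomp[OF fq])
  ultimately show ?thesis unfolding kQ_def by (auto intro: finite_subset)
qed

lemma kq_mult_bp_bp:
  assumes "is_path Q v" "is_path Q u" "fst v = pend Q u"
  shows "kq_mult Q (bp v) (bp u) = bp (pcomp v u)"
proof
  fix w
  have "kq_mult Q (bp v) (bp u) w = (\<Sum>z\<in>path_splittings Q w. if z = (v, u) then 1 else 0)"
    unfolding kq_mult_eq_sum by (rule sum.cong) (auto simp: bp_apply split: if_splits)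
  also have "\<dots> = (if (v, u) \<in> path_splittings Q w then 1 else 0)"
    by (rule sum.delta[OF finite_path_splittings])
  also have "\<dots> = bp (pcomp v u) w"
    using assms unfolding path_splittings_def bp_apply by auto
  finally show "kq_mult Q (bp v) (bp u) w = bp (pcomp v u) w" .
qed

lemma bp_Cons_eq_kq_mult:
  assumes fq: "finite_quiver Q" and p: "is_path Q (x, b # bs)"
  shows "bp (x, b # bs) = kq_mult Q (bp (tgt Q b, bs)) (bp (arrow_path Q b))"
proof -
  have b: "b \<in> arrs Q" "src Q b = x" and r: "is_path Q (tgt Q b, bs)"
    using p is_path_Cons[OF fq] by auto
  have "kq_mult Q (bp (tgt Q b, bs)) (bp (arrow_path Q b)) = bp (pcomp (tgt Q b, bs) (arrow_path Q b))"
    using arrow_path_props[OF fq b(1)] by (intro kq_mult_bp_bp r) simp_all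
  then show ?thesis unfolding pcomp_arrow_path b(2) by (rule sym)
qed

lemma kq_mult_bp_vertex_right:
  assumes f: "f \<in> kQ Q" and x: "x \<in> verts Q"
  shows "kq_mult Q f (bp (x, [])) = (\<lambda>w. if fst w = x then f w else 0)"
proof
  fix w
  have "kq_mult Q f (bp (x, [])) w =
      (\<Sum>z\<in>path_splittings Q w. if z = (w, (x, [])) then f w else 0)"
    unfolding kq_mult_eq_sum
    by (rule sum.cong) (auto simp: bp_apply path_splittings_def pcomp_def split: if_splits)
  also have "\<dots> = (if (w, (x, [])) \<in> path_splittings Q w then f w else 0)"
    by (rule sum.delta[OF finite_path_splittings])
  also have "\<dots> = (if fst w = x then f w else 0)"
    using f x unfolding path_splittings_def pcomp_def kQ_def by (cases w) auto
  finally show "kq_mult Q f (bp (x, [])) w = (if fst w = x then f w else 0)" .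
qed

lemma kq_mult_bp_vertex_left:
  assumes f: "f \<in> kQ Q" and y: "y \<in> verts Q"
  shows "kq_mult Q (bp (y, [])) f = (\<lambda>w. if pend Q w = y then f w else 0)"
proof
  fix w
  have "kq_mult Q (bp (y, [])) f w =
      (\<Sum>z\<in>path_splittings Q w. if z = ((y, []), w) then f w else 0)"
    unfolding kq_mult_eq_sum
    by (rule sum.cong) (auto simp: bp_apply path_splittings_def pcomp_def split: if_splits)
  also have "\<dots> = (if ((y, []), w) \<in> path_splittings Q w then f w else 0)"
    by (rule sum.delta[OF finite_path_splittings])
  also have "\<dots> = (if pend Q w = y then f w else 0)"
    using f y unfolding path_splittings_def pcomp_def kQ_def by (cases w) auto
  finally show "kq_mult Q (bp (y, [])) f w = (if pend Q w = y then f w else 0)" .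
qed

declare split_paired_All [simp del] split_paired_Ex [simp del]

definition lincomb :: "'p set \<Rightarrow> ('p \<Rightarrow> 'k::field) \<Rightarrow> ('p \<Rightarrow> 'q \<Rightarrow> 'k) \<Rightarrow> 'q \<Rightarrow> 'k" where
  "lincomb A c g = (\<lambda>w. \<Sum>q\<in>A. c q * g q w)"

definition restrict_to :: "'p set \<Rightarrow> ('p \<Rightarrow> 'k::field) \<Rightarrow> 'p \<Rightarrow> 'k" where
  "restrict_to C f = (\<lambda>w. if w \<in> C then f w else 0)"

lemma lincomb_insert:
  "a \<notin> A \<Longrightarrow> finite A \<Longrightarrow>
     lincomb (insert a A) c g = kq_add (kq_smult (c a) (g a)) (lincomb A c g)"
  unfolding lincomb_def kq_add_def kq_smult_def by auto

lemma lincomb_bp_supp: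
  assumes "finite {p. f p \<noteq> 0}"
  shows "lincomb {p. f p \<noteq> 0} f bp = f"
proof
  fix w
  have "lincomb {p. f p \<noteq> 0} f bp w = (\<Sum>q\<in>{p. f p \<noteq> 0}. if q = w then f w else 0)"
    unfolding lincomb_def by (rule sum.cong) (auto simp: bp_apply)
  then show "lincomb {p. f p \<noteq> 0} f bp w = f w"
    using assms by (auto simp: sum.delta')
qed

lemma restrict_to_kQ: "f \<in> kQ Q \<Longrightarrow> restrict_to C f \<in> kQ Q"
  by (erule kQ_subset_supp) (auto simp: restrict_to_def)

section \<open>Transvections\<close>

locale transvection =
  fixes Q :: "('v, 'e) quiver" and \<alpha> :: 'e and u :: "'v \<times> 'e list" and \<tau> :: "'k::field"
  assumes fq: "finite_quiver Q" and byp: "bypass Q \<alpha> u" and nc: "no_oriented_cycles Q"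
begin

abbreviation "\<phi> \<equiv> transv Q \<alpha> u \<tau>"
abbreviation "\<phi>_path \<equiv> phi_list Q \<alpha> u \<tau>"
abbreviation "\<phi>_arrow \<equiv> phi_arrow Q \<alpha> u \<tau>"

lemma alpha_arr: "\<alpha> \<in> arrs Q" and u_path: "is_path Q u" and u_fst: "fst u = src Q \<alpha>"
  and u_pend: "pend Q u = tgt Q \<alpha>" and u_ne: "u \<noteq> arrow_path Q \<alpha>"
  using byp unfolding bypass_def by auto

text \<open>A bypass of \<alpha> cannot pass through \<alpha> itself, as the rest of it would close an oriented cycle.\<close>
lemma alpha_notin_u: "\<alpha> \<notin> set (snd u)"
proof
  assume "\<alpha> \<in> set (snd u)"
  then obtain xs ys where u: "u = (src Q \<alpha>, xs @ \<alpha> # ys)"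
    using u_fst by (metis prod.collapse split_list)
  have p1: "is_path Q (src Q \<alpha>, xs)" and p2: "is_path Q (pend Q (src Q \<alpha>, xs), \<alpha> # ys)"
    using u_path u is_path_append[OF fq] by auto
  then have "pend Q (src Q \<alpha>, xs) = src Q \<alpha>" and p3: "is_path Q (tgt Q \<alpha>, ys)"
    using is_path_Cons[OF fq] by auto
  then have "xs = []" using nc p1 unfolding no_oriented_cycles_def by force
  moreover have "pend Q (tgt Q \<alpha>, ys) = tgt Q \<alpha>" using u_pend u \<open>xs = []\<close> by simp
  then have "ys = []" using nc p3 unfolding no_oriented_cycles_def by force
  ultimately show False using u_ne u unfolding arrow_path_def by simp
qed

lemma phi_arrow_kQ: "b \<in> arrs Q \<Longrightarrow> \<phi>_arrow b \<in> kQ Q"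
  unfolding phi_arrow_def
  by (auto intro!: kq_add_kQ kq_smult_kQ bp_kQ arrow_path_props[OF fq] u_path)

lemma phi_arrow_nonzero: "\<phi>_arrow b w \<noteq> 0 \<Longrightarrow> w = arrow_path Q b \<or> (b = \<alpha> \<and> w = u)"
  unfolding phi_arrow_def kq_add_def kq_smult_def bp_def by (auto split: if_splits)

lemma phi_arrow_diag: "\<phi>_arrow b (arrow_path Q b) = 1"
  using u_ne unfolding phi_arrow_def kq_add_def kq_smult_def bp_def by auto

lemma phi_path_kQ_parallel:
  "is_path Q (x, bs) \<Longrightarrow> \<phi>_path x bs \<in> kQ Q \<and>
     (\<forall>w. \<phi>_path x bs w \<noteq> 0 \<longrightarrow> fst w = x \<and> pend Q w = pend Q (x, bs))"
proof (induction bs arbitrary: x)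
  case Nil
  have "\<forall>w. bp (x, []) w \<noteq> 0 \<longrightarrow> fst w = x \<and> pend Q w = pend Q (x, [])"
    by (simp add: bp_apply)
  with Nil show ?case by (simp add: bp_kQ)
next
  case (Cons b bs)
  have b: "b \<in> arrs Q" "src Q b = x" and r: "is_path Q (tgt Q b, bs)"
    using Cons.prems is_path_Cons[OF fq] by auto
  note IH = Cons.IH[OF r]
  have "fst w = x \<and> pend Q w = pend Q (x, b # bs)"
    if nz: "kq_mult Q (\<phi>_path (tgt Q b) bs) (\<phi>_arrow b) w \<noteq> 0" for w
  proof -
    obtain v u' where v: "is_path Q v" "is_path Q u'" "fst v = pend Q u'" "pcomp v u' = w"
      "\<phi>_path (tgt Q b) bs v \<noteq> 0" "\<phi>_arrow b u' \<noteq> 0"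
      using nz by (rule kq_mult_nonzeroE)
    have "fst u' = x"
      using phi_arrow_nonzero[OF v(6)] arrow_path_props[OF fq b(1)] b u_fst by auto
    moreover have "pend Q v = pend Q (tgt Q b, bs)" using IH v(5) by blast
    ultimately show ?thesis using pend_pcomp[OF fq v(1,2,3)] v(4) by auto
  qed
  moreover have "kq_mult Q (\<phi>_path (tgt Q b) bs) (\<phi>_arrow b) \<in> kQ Q"
    using kq_mult_kQ[OF fq] IH phi_arrow_kQ[OF b(1)] by blast
  ultimately show ?case by simp
qed

lemma phi_path_kQ: "is_path Q p \<Longrightarrow> \<phi>_path (fst p) (snd p) \<in> kQ Q"
  using phi_path_kQ_parallel[of "fst p" "snd p"] by simp

lemma phi_path_nonzero_parallel:
  "is_path Q p \<Longrightarrow> \<phi>_path (fst p) (snd p) w \<noteq> 0 \<Longrightarrow> fst w = fst p \<and> pend Q w = pend Q p"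
  using phi_path_kQ_parallel[of "fst p" "snd p"] unfolding prod.collapse by blast

lemma transv_bp: "is_path Q p \<Longrightarrow> \<phi> (bp p) = \<phi>_path (fst p) (snd p)"
proof
  fix w
  have "{q. bp p q \<noteq> (0::'k)} = {p}" by (auto simp: bp_apply)
  then show "\<phi> (bp p) w = \<phi>_path (fst p) (snd p) w" unfolding transv_def by (simp add: bp_apply)
qed

lemma phi_path_avoiding_alpha: "is_path Q (x, bs) \<Longrightarrow> \<alpha> \<notin> set bs \<Longrightarrow> \<phi>_path x bs = bp (x, bs)"
proof (induction bs arbitrary: x)
  case (Cons b bs)
  have "is_path Q (tgt Q b, bs)" "b \<noteq> \<alpha>" using Cons.prems is_path_Cons[OF fq] by auto
  then have "\<phi>_path x (b # bs) = kq_mult Q (bp (tgt Q b, bs)) (bp (arrow_path Q b))"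
    using Cons.IH Cons.prems(2) by (simp add: phi_arrow_def)
  also have "\<dots> = bp (x, b # bs)"
    by (rule bp_Cons_eq_kq_mult[OF fq Cons.prems(1), symmetric])
  finally show ?case .
qed simp

lemma phi_path_arrow: "b \<in> arrs Q \<Longrightarrow> \<phi>_path (src Q b) [b] = \<phi>_arrow b"
proof -
  assume b: "b \<in> arrs Q"
  then have "tgt Q b \<in> verts Q" using fq unfolding finite_quiver_def by auto
  then have "\<phi>_path (src Q b) [b] = (\<lambda>w. if pend Q w = tgt Q b then \<phi>_arrow b w else 0)"
    using kq_mult_bp_vertex_left[OF phi_arrow_kQ[OF b]] by simp
  also have "\<dots> = \<phi>_arrow b"
    using phi_arrow_nonzero arrow_path_props[OF fq b] u_pend by fastforce
  finally show ?thesis .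
qed

lemma transv_eq_sum:
  assumes "finite B" "{p. f p \<noteq> 0} \<subseteq> B"
  shows "\<phi> f w = (\<Sum>p\<in>B. f p * \<phi>_path (fst p) (snd p) w)"
  unfolding transv_def by (rule sum.mono_neutral_left) (use assms in auto)

lemma transv_add:
  assumes "f \<in> kQ Q" "g \<in> kQ Q"
  shows "\<phi> (kq_add f g) = kq_add (\<phi> f) (\<phi> g)"
proof
  fix w
  let ?B = "{p. f p \<noteq> 0} \<union> {p. g p \<noteq> 0}"
  have B: "finite ?B" using assms kQ_finite by auto
  have "\<phi> (kq_add f g) w = (\<Sum>p\<in>?B. kq_add f g p * \<phi>_path (fst p) (snd p) w)"
    by (rule transv_eq_sum[OF B]) (auto simp: kq_add_def)
  also have "\<dots> = (\<Sum>p\<in>?B. f p * \<phi>_path (fst p) (snd p) w) + (\<Sum>p\<in>?B. g p * \<phi>_path (fst p) (snd p) w)"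
    by (simp add: kq_add_def distrib_right sum.distrib)
  also have "\<dots> = \<phi> f w + \<phi> g w"
    using transv_eq_sum[OF B, of f w] transv_eq_sum[OF B, of g w] by auto
  finally show "\<phi> (kq_add f g) w = kq_add (\<phi> f) (\<phi> g) w" by (simp add: kq_add_def)
qed

lemma transv_smult:
  assumes "f \<in> kQ Q"
  shows "\<phi> (kq_smult c f) = kq_smult c (\<phi> f)"
proof
  fix w
  let ?B = "{p. f p \<noteq> 0}"
  have B: "finite ?B" using assms kQ_finite by auto
  have "\<phi> (kq_smult c f) w = (\<Sum>p\<in>?B. kq_smult c f p * \<phi>_path (fst p) (snd p) w)"
    by (rule transv_eq_sum[OF B]) (auto simp: kq_smult_def)
  also have "\<dots> = c * \<phi> f w"
    by (simp add: kq_smult_def sum_distrib_left mult.assoc transv_def)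
  finally show "\<phi> (kq_smult c f) w = kq_smult c (\<phi> f) w" by (simp add: kq_smult_def)
qed

lemma transv_kQ:
  assumes f: "f \<in> kQ Q"
  shows "\<phi> f \<in> kQ Q"
proof -
  let ?B = "{p. f p \<noteq> 0}"
  let ?S = "\<Union>p\<in>?B. {w. \<phi>_path (fst p) (snd p) w \<noteq> 0}"
  have sub: "{w. \<phi> f w \<noteq> 0} \<subseteq> ?S"
  proof
    fix w assume "w \<in> {w. \<phi> f w \<noteq> 0}"
    then have "(\<Sum>p\<in>?B. f p * \<phi>_path (fst p) (snd p) w) \<noteq> 0" unfolding transv_def by simp
    then obtain p where "p \<in> ?B" "f p * \<phi>_path (fst p) (snd p) w \<noteq> 0"
      by (rule sum.not_neutral_contains_not_neutral)
    then show "w \<in> ?S" by auto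
  qed
  have "finite ?S"
    using kQ_finite[OF f] kQ_finite[OF phi_path_kQ[OF kQ_path[OF f]]] by auto
  then have "finite {w. \<phi> f w \<noteq> 0}" using sub by (rule finite_subset[rotated])
  moreover have "is_path Q w" if "\<phi> f w \<noteq> 0" for w
    using that sub phi_path_kQ kQ_path[OF f] kQ_path by blast
  ultimately show ?thesis unfolding kQ_def by blast
qed

lemma transv_lincomb:
  assumes "finite A" "\<forall>q\<in>A. g q \<in> kQ Q"
  shows "lincomb A c g \<in> kQ Q \<and> \<phi> (lincomb A c g) = lincomb A c (\<lambda>q. \<phi> (g q))"
  using assms
proof (induction A rule: finite_induct)
  case empty
  have "lincomb {} c g = (\<lambda>w. 0)" unfolding lincomb_def by simp
  then show ?case using zero_kQ by (simp add: transv_def lincomb_def)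
next
  case (insert a A)
  then show ?case by (simp add: lincomb_insert kq_add_kQ kq_smult_kQ transv_add transv_smult)
qed

lemma transv_restrict_to:
  assumes f: "f \<in> kQ Q"
    and C: "\<And>p q. is_path Q p \<Longrightarrow> \<phi>_path (fst p) (snd p) q \<noteq> 0 \<Longrightarrow> p \<in> C \<longleftrightarrow> q \<in> C"
  shows "\<phi> (restrict_to C f) = restrict_to C (\<phi> f)"
proof
  fix w
  let ?B = "{p. f p \<noteq> 0}"
  have B: "finite ?B" using assms kQ_finite by auto
  have "\<phi> (restrict_to C f) w = (\<Sum>p\<in>?B. restrict_to C f p * \<phi>_path (fst p) (snd p) w)"
    by (rule transv_eq_sum[OF B]) (auto simp: restrict_to_def)
  also have "\<dots> = (\<Sum>p\<in>?B. if w \<in> C then f p * \<phi>_path (fst p) (snd p) w else 0)"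
  proof (rule sum.cong)
    fix p assume "p \<in> ?B"
    then have "is_path Q p" using kQ_path[OF f] by auto
    then show "restrict_to C f p * \<phi>_path (fst p) (snd p) w =
        (if w \<in> C then f p * \<phi>_path (fst p) (snd p) w else 0)"
      using C[of p w] unfolding restrict_to_def by (cases "\<phi>_path (fst p) (snd p) w = 0") auto
  qed simp
  also have "\<dots> = restrict_to C (\<phi> f) w"
    using transv_eq_sum[OF B, of f w] unfolding restrict_to_def by auto
  finally show "\<phi> (restrict_to C f) w = restrict_to C (\<phi> f) w" .
qed

text \<open>Counting occurrences of \<alpha>, the transvection is unitriangular: u avoids \<alpha>.\<close>
lemma phi_path_Cons_factors:
  assumes lower: "\<And>v. \<phi>_path (tgt Q b) bs v \<noteq> 0 \<Longrightarrow>
      v = (tgt Q b, bs) \<or> count_list (snd v) \<alpha> < count_list bs \<alpha>"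
    and v: "\<phi>_path (tgt Q b) bs v \<noteq> 0" and u': "\<phi>_arrow b u' \<noteq> 0"
  shows "(v = (tgt Q b, bs) \<and> u' = arrow_path Q b) \<or>
    count_list (snd (pcomp v u')) \<alpha> < count_list (b # bs) \<alpha>"
  using phi_arrow_nonzero[OF u'] lower[OF v] alpha_notin_u
  by (auto simp: pcomp_def arrow_path_def)

lemma phi_path_nonzero_lower:
  "is_path Q (x, bs) \<Longrightarrow> \<phi>_path x bs w \<noteq> 0 \<Longrightarrow>
     w = (x, bs) \<or> count_list (snd w) \<alpha> < count_list bs \<alpha>"
proof (induction bs arbitrary: x w)
  case Nil
  then show ?case by (simp add: bp_apply split: if_splits)
next
  case (Cons b bs)
  have "src Q b = x" and r: "is_path Q (tgt Q b, bs)"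
    using Cons.prems is_path_Cons[OF fq] by auto
  obtain v u' where "pcomp v u' = w" "\<phi>_path (tgt Q b) bs v \<noteq> 0" "\<phi>_arrow b u' \<noteq> 0"
    using Cons.prems(2) by (auto elim: kq_mult_nonzeroE)
  then show ?case
    using phi_path_Cons_factors[OF Cons.IH[OF r]] pcomp_arrow_path \<open>src Q b = x\<close> by metis
qed

lemma phi_path_diag: "is_path Q (x, bs) \<Longrightarrow> \<phi>_path x bs (x, bs) = 1"
proof (induction bs arbitrary: x)
  case Nil
  then show ?case by (simp add: bp_apply)
next
  case (Cons b bs)
  have b: "b \<in> arrs Q" "src Q b = x" and r: "is_path Q (tgt Q b, bs)"
    using Cons.prems is_path_Cons[OF fq] by auto
  define r' where "r' = (tgt Q b, bs)"
  have p: "pcomp r' (arrow_path Q b) = (x, b # bs)"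
    unfolding r'_def using b pcomp_arrow_path by metis
  note factors = phi_path_Cons_factors[OF phi_path_nonzero_lower[OF r], folded r'_def]
  have "\<phi>_path x (b # bs) (x, b # bs) =
      (\<Sum>z\<in>path_splittings Q (x, b # bs). if z = (r', arrow_path Q b) then 1 else 0)"
    unfolding phi_list.simps kq_mult_eq_sum
  proof (rule sum.cong)
    fix z assume "z \<in> path_splittings Q (x, b # bs)"
    then show "(case z of (v, u') \<Rightarrow> \<phi>_path (tgt Q b) bs v * \<phi>_arrow b u') =
        (if z = (r', arrow_path Q b) then 1 else 0)"
      using factors Cons.IH[OF r] phi_arrow_diag unfolding path_splittings_def r'_def
      by (cases z) fastforce
  qed simp
  also have "\<dots> = 1"
    using r arrow_path_props[OF fq b(1)] p
    by (subst sum.delta[OF finite_path_splittings]) (simp add: path_splittings_def r'_def)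
  finally show ?case .
qed

lemma transv_onto_if_basis:
  assumes f: "f \<in> kQ Q" and basis: "\<And>q. f q \<noteq> 0 \<Longrightarrow> \<exists>g\<in>kQ Q. \<phi> g = bp q"
  shows "\<exists>g\<in>kQ Q. \<phi> g = f"
proof -
  define G where "G q = (SOME g. g \<in> kQ Q \<and> \<phi> g = bp q)" for q
  have G: "G q \<in> kQ Q \<and> \<phi> (G q) = bp q" if "f q \<noteq> 0" for q
    using someI_ex[OF basis[OF that, unfolded Bex_def]] unfolding G_def .
  have fin: "finite {w. f w \<noteq> 0}" using f kQ_finite by blast
  have L: "lincomb {w. f w \<noteq> 0} f G \<in> kQ Q \<and>
      \<phi> (lincomb {w. f w \<noteq> 0} f G) = lincomb {w. f w \<noteq> 0} f (\<lambda>q. \<phi> (G q))"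
    using G by (intro transv_lincomb[OF fin]) blast
  have "lincomb {w. f w \<noteq> 0} f (\<lambda>q. \<phi> (G q)) = lincomb {w. f w \<noteq> 0} f bp"
    unfolding lincomb_def using G by (intro ext sum.cong) auto
  then show ?thesis using L lincomb_bp_supp[OF fin] by metis
qed

lemma transv_onto_bp: "is_path Q p \<Longrightarrow> \<exists>g\<in>kQ Q. \<phi> g = bp p"
proof (induction "count_list (snd p) \<alpha>" arbitrary: p rule: less_induct)
  case less
  have "is_path Q (fst p, snd p)" using less.prems by simp
  note diag = phi_path_diag[OF this, unfolded prod.collapse]
    and lower = phi_path_nonzero_lower[OF this, unfolded prod.collapse]
  define R where "R = kq_add (\<phi>_path (fst p) (snd p)) (kq_smult (-1) (bp p))"
  have R: "R \<in> kQ Q"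
    unfolding R_def by (intro kq_add_kQ kq_smult_kQ phi_path_kQ bp_kQ less.prems)
  have "R q \<noteq> 0 \<Longrightarrow> count_list (snd q) \<alpha> < count_list (snd p) \<alpha>" for q
    using diag lower[of q] unfolding R_def kq_add_def kq_smult_def bp_apply by (auto split: if_splits)
  then obtain g where g: "g \<in> kQ Q" "\<phi> g = R"
    using transv_onto_if_basis[OF R] less.hyps kQ_path[OF R] by blast
  let ?h = "kq_add (bp p) (kq_smult (-1) g)"
  have "\<phi> ?h = kq_add (\<phi> (bp p)) (kq_smult (-1) R)"
    using g transv_add transv_smult bp_kQ[OF less.prems] kq_smult_kQ by metis
  also have "\<dots> = bp p"
    unfolding transv_bp[OF less.prems] R_def kq_add_def kq_smult_def by auto
  finally show ?case using g bp_kQ[OF less.prems] by (intro bexI[of _ ?h] kq_add_kQ kq_smult_kQ)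
qed

lemma transv_onto: "f \<in> kQ Q \<Longrightarrow> \<exists>g\<in>kQ Q. \<phi> g = f"
  using transv_onto_if_basis transv_onto_bp kQ_path by blast

lemma phi_path_nonzero_wrel:
  assumes \<alpha>u: "wrel Q K (pwalk (arrow_path Q \<alpha>)) (pwalk u)"
  shows "is_path Q (x, bs) \<Longrightarrow> \<phi>_path x bs w \<noteq> 0 \<Longrightarrow> wrel Q K (pwalk (x, bs)) (pwalk w)"
proof (induction bs arbitrary: x w)
  case Nil
  then have "w = (x, [])" by (simp add: bp_apply split: if_splits)
  then show ?case using Nil.prems(1) by (simp add: wrel_refl is_walk_pwalk)
next
  case (Cons b bs)
  have b: "b \<in> arrs Q" "src Q b = x" and r: "is_path Q (tgt Q b, bs)"
    using Cons.prems is_path_Cons[OF fq] by auto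
  obtain v u' where v: "is_path Q v" "is_path Q u'" "fst v = pend Q u'" "pcomp v u' = w"
      "\<phi>_path (tgt Q b) bs v \<noteq> 0" "\<phi>_arrow b u' \<noteq> 0"
    using Cons.prems(2) by (auto elim: kq_mult_nonzeroE)
  have "wrel Q K (pwalk (arrow_path Q b)) (pwalk u')"
    using phi_arrow_nonzero[OF v(6)] \<alpha>u wrel_refl[OF is_walk_pwalk[OF v(2)]] by auto
  then show ?case
  proof (rule wrel_concI[OF _ Cons.IH[OF r v(5)]])
    show "wend Q (pwalk (arrow_path Q b)) = fst (pwalk (tgt Q b, bs))"
      using arrow_path_props[OF fq b(1)] by (simp add: wend_pwalk)
    show "pwalk (x, b # bs) = wconc (pwalk (arrow_path Q b)) (pwalk (tgt Q b, bs))"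
      using b(2) pcomp_arrow_path pwalk_pcomp by metis
  qed (use v(3,4) in \<open>auto simp: wend_pwalk pwalk_pcomp\<close>)
qed

end

section \<open>Minimal relations\<close>

lemma minrel_iff:
  "minrel Q K f \<longleftrightarrow> f \<in> K \<and> f \<noteq> (\<lambda>_. 0) \<and>
     (\<forall>S. S \<subseteq> {p. f p \<noteq> 0} \<and> S \<noteq> {} \<and> S \<noteq> {p. f p \<noteq> 0} \<longrightarrow> restrict_to S f \<notin> K)"
  unfolding minrel_def restrict_to_def ..

lemma minrel_support_closed:
  assumes "minrel Q K f" "restrict_to C f \<in> K" "f p \<noteq> 0" "p \<in> C" "f q \<noteq> 0"
  shows "q \<in> C"
proof (rule ccontr)
  assume "q \<notin> C"
  then have "{w. f w \<noteq> 0} \<inter> C \<subseteq> {w. f w \<noteq> 0}" "{w. f w \<noteq> 0} \<inter> C \<noteq> {}"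
    "{w. f w \<noteq> 0} \<inter> C \<noteq> {w. f w \<noteq> 0}"
    using assms(3-5) by auto
  then have "restrict_to ({w. f w \<noteq> 0} \<inter> C) f \<notin> K"
    using assms(1) unfolding minrel_iff by blast
  moreover have "restrict_to ({w. f w \<noteq> 0} \<inter> C) f = restrict_to C f"
    unfolding restrict_to_def by auto
  ultimately show False using assms(2) by simp
qed

text \<open>A restriction of g lying in K with minimal nonempty support is a minimal relation.\<close>
lemma minrel_in_support:
  assumes g: "g \<in> K" and fin: "finite {w. g w \<noteq> 0}" and ne: "{w. g w \<noteq> 0} \<noteq> {}"
  obtains S where "S \<subseteq> {w. g w \<noteq> 0}" "S \<noteq> {}" "minrel Q K (restrict_to S g)"
proof -
  define P where "P S \<longleftrightarrow> S \<subseteq> {w. g w \<noteq> 0} \<and> S \<noteq> {} \<and> restrict_to S g \<in> K" for S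
  have "restrict_to {w. g w \<noteq> 0} g = g" unfolding restrict_to_def by auto
  then have "P {w. g w \<noteq> 0}" using g ne unfolding P_def by simp
  then obtain S where "P S" and min: "\<And>S'. P S' \<Longrightarrow> card S \<le> card S'"
    using ex_has_least_nat[of P _ card] by blast
  then have S: "S \<subseteq> {w. g w \<noteq> 0}" "S \<noteq> {}" "restrict_to S g \<in> K"
    unfolding P_def by auto
  have supp: "{w. restrict_to S g w \<noteq> 0} = S" using S(1) unfolding restrict_to_def by auto
  have "restrict_to S' (restrict_to S g) \<notin> K"
    if S': "S' \<subseteq> S" "S' \<noteq> {}" "S' \<noteq> S" for S'
  proof
    assume "restrict_to S' (restrict_to S g) \<in> K"
    moreover have "restrict_to S' (restrict_to S g) = restrict_to S' g"
      using S'(1) unfolding restrict_to_def by (intro ext) auto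
    ultimately have "P S'" using S S' unfolding P_def by auto
    moreover have "card S' < card S"
      using S' finite_subset[OF S(1) fin] by (simp add: psubset_card_mono psubsetI)
    ultimately show False using min by fastforce
  qed
  moreover have "restrict_to S g \<noteq> (\<lambda>_. 0)"
  proof
    assume "restrict_to S g = (\<lambda>_. 0)"
    then have "{w. restrict_to S g w \<noteq> 0} = {}" by simp
    then show False using supp S(2) by simp
  qed
  ultimately have "minrel Q K (restrict_to S g)" unfolding minrel_iff supp using S(3) by blast
  then show ?thesis using S that by blast
qed

text \<open>Splitting off minimal relations one at a time writes every element of the kernel as a sum
  of minimal relations with disjoint supports.\<close>
lemma kerP_restrict_to:
  fixes M :: "('v \<times> 'e list \<Rightarrow> 'k::field) \<Rightarrow> 'a::ab_group_add"
  assumes add: "\<And>f g. f \<in> kQ Q \<Longrightarrow> g \<in> kQ Q \<Longrightarrow> M (kq_add f g) = M f + M g"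
    and C: "\<And>g s t. minrel Q (kerP Q M) g \<Longrightarrow> g s \<noteq> 0 \<Longrightarrow> g t \<noteq> 0 \<Longrightarrow> s \<in> C \<longleftrightarrow> t \<in> C"
  shows "g \<in> kerP Q M \<Longrightarrow> restrict_to C g \<in> kerP Q M"
proof (induction "card {w. g w \<noteq> 0}" arbitrary: g rule: less_induct)
  case less
  let ?K = "kerP Q M"
  have g: "g \<in> kQ Q" "M g = 0" using less.prems unfolding kerP_def by auto
  have fin: "finite {w. g w \<noteq> 0}" using g kQ_finite by blast
  show ?case
  proof (cases "{w. g w \<noteq> 0} = {}")
    case True
    then have "restrict_to C g = g" unfolding restrict_to_def by auto
    then show ?thesis using less.prems by simp
  next
    case False
    then obtain S where S: "S \<subseteq> {w. g w \<noteq> 0}" "S \<noteq> {}" "minrel Q ?K (restrict_to S g)"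
      using minrel_in_support[OF less.prems fin] by blast
    define g' where "g' = restrict_to (- S) g"
    have split: "kq_add (restrict_to S g) g' = g"
      "kq_add (restrict_to C (restrict_to S g)) (restrict_to C g') = restrict_to C g"
      unfolding g'_def restrict_to_def kq_add_def by auto
    have kQ: "restrict_to S g \<in> kQ Q" "g' \<in> kQ Q"
      "restrict_to C (restrict_to S g) \<in> kQ Q" "restrict_to C g' \<in> kQ Q"
      unfolding g'_def using g(1) by (auto intro: restrict_to_kQ)
    have MS: "M (restrict_to S g) = 0" using S(3) unfolding minrel_def kerP_def by simp
    then have "M g' = 0" using add[OF kQ(1,2)] split(1) g(2) by simp
    moreover have "card {w. g' w \<noteq> 0} < card {w. g w \<noteq> 0}"
      using S(1,2) fin unfolding g'_def restrict_to_def by (intro psubset_card_mono) auto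
    ultimately have IH: "M (restrict_to C g') = 0"
      using less.hyps[of g'] kQ(2) unfolding kerP_def by simp
    have "s \<in> C \<longleftrightarrow> t \<in> C" if "s \<in> S" "t \<in> S" for s t
      using C[OF S(3), of s t] that S(1) unfolding restrict_to_def by auto
    then have "S \<subseteq> C \<or> S \<inter> C = {}" by blast
    then have "restrict_to C (restrict_to S g) \<in> {restrict_to S g, \<lambda>w. 0}"
      unfolding restrict_to_def by (auto simp: fun_eq_iff)
    moreover have "M (\<lambda>w. 0) = 0"
      using add[OF zero_kQ zero_kQ] by (simp add: kq_add_def)
    ultimately have "M (restrict_to C (restrict_to S g)) = 0"
      using MS by auto
    then show ?thesis
      using add[OF kQ(3,4)] split(2) IH restrict_to_kQ[OF g(1)] unfolding kerP_def by simp
  qed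
qed

lemma kerP_subset_kQ: "kerP Q M \<subseteq> kQ Q"
  unfolding kerP_def by blast

abbreviation parallel_paths :: "('v, 'e) quiver \<Rightarrow> 'v \<Rightarrow> 'v \<Rightarrow> ('v \<times> 'e list) set" where
  "parallel_paths Q x y \<equiv> {w. fst w = x \<and> pend Q w = y}"

lemma minrel_parallel:
  assumes K: "K \<subseteq> kQ Q"
    and KR: "\<And>f x y. f \<in> K \<Longrightarrow> x \<in> verts Q \<Longrightarrow> y \<in> verts Q \<Longrightarrow>
      restrict_to (parallel_paths Q x y) f \<in> K"
    and fq: "finite_quiver Q" and m: "minrel Q K f" and p: "f p \<noteq> 0" and q: "f q \<noteq> 0"
  shows "is_path Q p \<and> is_path Q q \<and> fst p = fst q \<and> pend Q p = pend Q q"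
proof -
  have f: "f \<in> K" "f \<in> kQ Q" using m K unfolding minrel_def by auto
  have pq: "is_path Q p" "is_path Q q" using kQ_path[OF f(2)] p q by auto
  then have "fst p \<in> verts Q" "pend Q p \<in> verts Q"
    using pend_in_verts[OF fq] unfolding is_path_iff by auto
  then have "restrict_to (parallel_paths Q (fst p) (pend Q p)) f \<in> K" using KR f by blast
  from minrel_support_closed[OF m this p _ q] show ?thesis using pq by simp
qed

lemma presentation_kerP_restrict_parallel:
  assumes fq: "finite_quiver Q" and pr: "presentation Q eA sm \<nu>"
    and f: "f \<in> kerP Q \<nu>" and x: "x \<in> verts Q" and y: "y \<in> verts Q"
  shows "restrict_to (parallel_paths Q x y) f \<in> kerP Q \<nu>"
proof -
  have f: "f \<in> kQ Q" "\<nu> f = 0" using f unfolding kerP_def by auto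
  have e: "bp (x, []) \<in> kQ Q" "bp (y, []) \<in> kQ Q" using x y by (auto intro: bp_kQ)
  have fx: "kq_mult Q f (bp (x, [])) \<in> kQ Q" by (rule kq_mult_kQ[OF fq f(1) e(1)])
  have "kq_mult Q (bp (y, [])) (kq_mult Q f (bp (x, []))) =
      (\<lambda>w. if pend Q w = y then kq_mult Q f (bp (x, [])) w else 0)"
    by (rule kq_mult_bp_vertex_left[OF fx y])
  also have "\<dots> = restrict_to (parallel_paths Q x y) f"
    unfolding kq_mult_bp_vertex_right[OF f(1) x] restrict_to_def by auto
  finally have "restrict_to (parallel_paths Q x y) f = kq_mult Q (bp (y, [])) (kq_mult Q f (bp (x, [])))"
    by simp
  moreover have mult: "\<nu> (kq_mult Q g h) = \<nu> g * \<nu> h" if "g \<in> kQ Q" "h \<in> kQ Q" for g h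
    using pr that unfolding presentation_def by blast
  ultimately show ?thesis
    using kq_mult_kQ[OF fq e(2) fx] mult[OF e(2) fx] mult[OF f(1) e(1)] f(2)
    unfolding kerP_def by simp
qed

locale transvected_presentation = transvection Q \<alpha> u \<tau>
  for Q :: "('v, 'e) quiver" and \<alpha> u and \<tau> :: "'k::field" +
  fixes eA :: "'v \<Rightarrow> 'a::ring_1" and sm :: "'k \<Rightarrow> 'a \<Rightarrow> 'a" and \<nu> :: "('v \<times> 'e list \<Rightarrow> 'k) \<Rightarrow> 'a"
  assumes pres: "presentation Q eA sm \<nu>" and kal: "k_algebra sm"
begin

abbreviation "\<mu> \<equiv> \<nu> \<circ> \<phi>"
abbreviation "I \<equiv> kerP Q \<nu>"
abbreviation "J \<equiv> kerP Q \<mu>"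

lemma nu_add: "f \<in> kQ Q \<Longrightarrow> g \<in> kQ Q \<Longrightarrow> \<nu> (kq_add f g) = \<nu> f + \<nu> g"
  and nu_mult: "f \<in> kQ Q \<Longrightarrow> g \<in> kQ Q \<Longrightarrow> \<nu> (kq_mult Q f g) = \<nu> f * \<nu> g"
  and nu_smult: "f \<in> kQ Q \<Longrightarrow> \<nu> (kq_smult c f) = sm c (\<nu> f)"
  using pres unfolding presentation_def by auto

lemma mu_add: "f \<in> kQ Q \<Longrightarrow> g \<in> kQ Q \<Longrightarrow> \<mu> (kq_add f g) = \<mu> f + \<mu> g"
  by (simp add: transv_add nu_add transv_kQ)

lemma J_restrict_parallel:
  assumes f: "f \<in> J" and x: "x \<in> verts Q" and y: "y \<in> verts Q"
  shows "restrict_to (parallel_paths Q x y) f \<in> J"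
proof -
  have f: "f \<in> kQ Q" "\<phi> f \<in> I" using f transv_kQ unfolding kerP_def by auto
  have "\<phi> (restrict_to (parallel_paths Q x y) f) = restrict_to (parallel_paths Q x y) (\<phi> f)"
    using phi_path_nonzero_parallel by (intro transv_restrict_to f(1)) auto
  moreover have "restrict_to (parallel_paths Q x y) (\<phi> f) \<in> I"
    by (rule presentation_kerP_restrict_parallel[OF fq pres f(2) x y])
  ultimately show ?thesis using restrict_to_kQ[OF f(1)] unfolding kerP_def by simp
qed

lemma wrel_parallel_I: "wrel_parallel Q I"
  by (rule wrel_parallelI[OF fq minrel_parallel[OF kerP_subset_kQ
        presentation_kerP_restrict_parallel[OF fq pres] fq]])

lemma wrel_parallel_J: "wrel_parallel Q J"
  by (rule wrel_parallelI[OF fq minrel_parallel[OF kerP_subset_kQ J_restrict_parallel fq]])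

context
  assumes alpha_sim_u: "wrel Q J (pwalk (arrow_path Q \<alpha>)) (pwalk u)"
begin

text \<open>Pull a minimal relation \<rho> of I back to \<rho>' in J and split \<rho>' along the J-homotopy class C
  of p; since \<phi> moves paths only within their J-class, \<phi> maps the C-part of \<rho>' onto the C-part
  of \<rho>, which therefore lies in I and, by minimality, is all of \<rho>.\<close>
lemma minrel_I_wrel_J:
  assumes m: "minrel Q I \<rho>" and p: "\<rho> p \<noteq> 0" and q: "\<rho> q \<noteq> 0"
  shows "wrel Q J (pwalk p) (pwalk q)"
proof -
  define C where "C = {w. wrel Q J (pwalk p) (pwalk w)}"
  have C: "s \<in> C \<longleftrightarrow> t \<in> C" if "wrel Q J (pwalk s) (pwalk t)" for s t
    using that wrel_sym[OF that] unfolding C_def mem_Collect_eq by (meson wrel_trans)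
  have \<rho>: "\<rho> \<in> kQ Q" "\<nu> \<rho> = 0" using m unfolding minrel_def kerP_def by auto
  obtain \<rho>' where \<rho>': "\<rho>' \<in> kQ Q" "\<phi> \<rho>' = \<rho>" using transv_onto[OF \<rho>(1)] by blast
  have "restrict_to C \<rho>' \<in> J"
  proof (rule kerP_restrict_to)
    show "\<rho>' \<in> J" using \<rho> \<rho>' unfolding kerP_def by simp
    show "s \<in> C \<longleftrightarrow> t \<in> C" if "minrel Q J g" "g s \<noteq> 0" "g t \<noteq> 0" for g s t
      using C wrel_minrel[OF that] by blast
  qed (use mu_add in auto)
  moreover have "\<phi> (restrict_to C \<rho>') = restrict_to C \<rho>"
    using C phi_path_nonzero_wrel[OF alpha_sim_u] \<rho>'
    by (metis transv_restrict_to prod.collapse)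
  ultimately have "restrict_to C \<rho> \<in> I" using restrict_to_kQ[OF \<rho>(1)] unfolding kerP_def by simp
  moreover have "p \<in> C" unfolding C_def using kQ_path[OF \<rho>(1) p] by (simp add: wrel_refl is_walk_pwalk)
  ultimately have "q \<in> C" using minrel_support_closed[OF m _ p _ q] by blast
  then show ?thesis unfolding C_def by simp
qed

lemma wrel_I_le_wrel_J: "wrel Q I \<le> wrel Q J"
proof (rule predicate2I)
  show "wrel Q J w v" if "wrel Q I w v" for w v
    using that
  proof (induction rule: wrel.induct)
    case (wrel_minrel f p q)
    then show ?case by (rule minrel_I_wrel_J)
  qed (auto intro: wrel.intros)
qed

end

end

section \<open>Derivations\<close>

lemma k_algebra_module: "k_algebra sm \<Longrightarrow> module sm"
  unfolding k_algebra_def module_iff_vector_space by simp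

lemma Der0_diff:
  assumes "D \<in> Der0 Q eA sm"
  shows "D (a - b) = D a - D b"
proof -
  have "D ((a - b) + b) = D (a - b) + D b" using assms unfolding Der0_def by blast
  then show ?thesis by (simp add: eq_diff_eq)
qed

lemma Der0_scales_paths:
  fixes D :: "'a::ring_1 \<Rightarrow> 'a" and sm :: "'k::field \<Rightarrow> 'a \<Rightarrow> 'a"
  assumes fq: "finite_quiver Q" and D: "D \<in> Der0 Q eA sm" and kal: "k_algebra sm"
    and h_Cons: "\<And>x b bs. is_path Q (x, b # bs) \<Longrightarrow> h (x, b # bs) = h (tgt Q b, bs) * k b"
    and vertex: "\<And>x. x \<in> verts Q \<Longrightarrow> D (h (x, [])) = sm (F (x, [])) (h (x, []))"
    and arrow: "\<And>b. b \<in> arrs Q \<Longrightarrow> D (k b) = sm (F (arrow_path Q b)) (k b)"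
    and F_Cons: "\<And>x b bs. is_path Q (x, b # bs) \<Longrightarrow>
      F (x, b # bs) = F (arrow_path Q b) + F (tgt Q b, bs)"
  shows "\<forall>p. is_path Q p \<longrightarrow> D (h p) = sm (F p) (h p)"
proof -
  have "is_path Q (x, bs) \<Longrightarrow> D (h (x, bs)) = sm (F (x, bs)) (h (x, bs))" for x bs
  proof (induction bs arbitrary: x)
    case Nil
    then show ?case using vertex by simp
  next
    case (Cons b bs)
    have b: "b \<in> arrs Q" and r: "is_path Q (tgt Q b, bs)"
      using Cons.prems is_path_Cons[OF fq] by auto
    have sm_mult: "sm c (a * a') = sm c a * a'" "sm c (a * a') = a * sm c a'" for c a a'
      using kal unfolding k_algebra_def by blast+
    have "D (h (x, b # bs)) = D (h (tgt Q b, bs)) * k b + h (tgt Q b, bs) * D (k b)"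
      using h_Cons[OF Cons.prems] D unfolding Der0_def by simp
    also have "\<dots> = sm (F (tgt Q b, bs)) (h (tgt Q b, bs) * k b) +
        sm (F (arrow_path Q b)) (h (tgt Q b, bs) * k b)"
      using Cons.IH[OF r] arrow[OF b] by (simp add: sm_mult[symmetric])
    also have "\<dots> = sm (F (x, b # bs)) (h (x, b # bs))"
      using F_Cons[OF Cons.prems] h_Cons[OF Cons.prems]
        module.scale_left_distrib[OF k_algebra_module[OF kal]] by (simp add: add.commute)
    finally show ?case .
  qed
  then show ?thesis by (simp add: split_paired_All)
qed

context transvected_presentation
begin

lemma nu_Cons:
  assumes p: "is_path Q (x, b # bs)"
  shows "\<nu> (bp (x, b # bs)) = \<nu> (bp (tgt Q b, bs)) * \<nu> (bp (arrow_path Q b))"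
proof -
  have "b \<in> arrs Q" "is_path Q (tgt Q b, bs)" using p is_path_Cons[OF fq] by auto
  then show ?thesis
    using bp_Cons_eq_kq_mult[OF fq p] nu_mult bp_kQ arrow_path_props(1)[OF fq] by metis
qed

lemma mu_Cons:
  assumes p: "is_path Q (x, b # bs)"
  shows "\<mu> (bp (x, b # bs)) = \<mu> (bp (tgt Q b, bs)) * \<nu> (\<phi>_arrow b)"
proof -
  have b: "b \<in> arrs Q" and r: "is_path Q (tgt Q b, bs)" using p is_path_Cons[OF fq] by auto
  have "\<mu> (bp (x, b # bs)) = \<nu> (kq_mult Q (\<phi>_path (tgt Q b) bs) (\<phi>_arrow b))"
    using transv_bp[OF p] by simp
  also have "\<dots> = \<nu> (\<phi>_path (tgt Q b) bs) * \<nu> (\<phi>_arrow b)"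
    using nu_mult[OF phi_path_kQ[OF r] phi_arrow_kQ[OF b]] by simp
  also have "\<nu> (\<phi>_path (tgt Q b) bs) = \<mu> (bp (tgt Q b, bs))"
    using transv_bp[OF r] by simp
  finally show ?thesis .
qed

lemma mu_vertex: "x \<in> verts Q \<Longrightarrow> \<mu> (bp (x, [])) = \<nu> (bp (x, []))"
  using transv_bp[of "(x, [])"] by simp

lemma mu_arrow: "b \<in> arrs Q \<Longrightarrow> \<mu> (bp (arrow_path Q b)) = \<nu> (\<phi>_arrow b)"
  using transv_bp[OF arrow_path_props(1)[OF fq]] phi_path_arrow unfolding arrow_path_def by simp

lemma mu_u: "\<mu> (bp u) = \<nu> (bp u)"
proof -
  have "is_path Q (fst u, snd u)" using u_path by simp
  from phi_path_avoiding_alpha[OF this alpha_notin_u] show ?thesis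
    using transv_bp[OF u_path] by simp
qed

lemma nu_phi_arrow: "b \<noteq> \<alpha> \<Longrightarrow> \<nu> (\<phi>_arrow b) = \<nu> (bp (arrow_path Q b))"
  unfolding phi_arrow_def by simp

lemma nu_phi_arrow_alpha: "\<nu> (\<phi>_arrow \<alpha>) = \<nu> (bp (arrow_path Q \<alpha>)) + sm \<tau> (\<nu> (bp u))"
proof -
  have k: "bp (arrow_path Q \<alpha>) \<in> kQ Q" "bp u \<in> kQ Q"
    using bp_kQ arrow_path_props(1)[OF fq alpha_arr] u_path by blast+
  show ?thesis
    unfolding phi_arrow_def using nu_add[OF k(1) kq_smult_kQ[OF k(2)]] nu_smult[OF k(2)] by simp
qed

lemma nu_arrow_scaled_if_mu_scaled:
  assumes D: "D \<in> Der0 Q eA sm" and Fu: "F u = F (arrow_path Q \<alpha>)"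
    and H: "\<And>p. is_path Q p \<Longrightarrow> D (\<mu> (bp p)) = sm (F p) (\<mu> (bp p))" and b: "b \<in> arrs Q"
  shows "D (\<nu> (bp (arrow_path Q b))) = sm (F (arrow_path Q b)) (\<nu> (bp (arrow_path Q b)))"
proof (cases "b = \<alpha>")
  case True
  note sm = module.scale_right_diff_distrib[OF k_algebra_module[OF kal]]
    module.scale_scale[OF k_algebra_module[OF kal]]
  have e: "\<nu> (bp (arrow_path Q \<alpha>)) = \<mu> (bp (arrow_path Q \<alpha>)) - sm \<tau> (\<mu> (bp u))"
    using nu_phi_arrow_alpha mu_arrow[OF alpha_arr] mu_u by simp
  have "D (\<nu> (bp (arrow_path Q \<alpha>))) =
      sm (F (arrow_path Q \<alpha>)) (\<mu> (bp (arrow_path Q \<alpha>))) - sm \<tau> (sm (F u) (\<mu> (bp u)))"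
    unfolding e Der0_diff[OF D] using D H[OF arrow_path_props(1)[OF fq alpha_arr]] H[OF u_path]
    unfolding Der0_def by simp
  also have "\<dots> = sm (F (arrow_path Q \<alpha>)) (\<nu> (bp (arrow_path Q \<alpha>)))"
    unfolding e Fu sm by (simp add: mult.commute)
  finally show ?thesis using True by simp
qed (use H[OF arrow_path_props(1)[OF fq b]] mu_arrow[OF b] nu_phi_arrow in simp)

lemma mu_arrow_scaled_if_nu_scaled:
  assumes D: "D \<in> Der0 Q eA sm" and Fu: "F u = F (arrow_path Q \<alpha>)"
    and H: "\<And>p. is_path Q p \<Longrightarrow> D (\<nu> (bp p)) = sm (F p) (\<nu> (bp p))" and b: "b \<in> arrs Q"
  shows "D (\<nu> (\<phi>_arrow b)) = sm (F (arrow_path Q b)) (\<nu> (\<phi>_arrow b))"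
proof (cases "b = \<alpha>")
  case True
  note sm = module.scale_right_distrib[OF k_algebra_module[OF kal]]
    module.scale_scale[OF k_algebra_module[OF kal]]
  have "D (\<nu> (\<phi>_arrow \<alpha>)) =
      sm (F (arrow_path Q \<alpha>)) (\<nu> (bp (arrow_path Q \<alpha>))) + sm \<tau> (sm (F u) (\<nu> (bp u)))"
    unfolding nu_phi_arrow_alpha using D H[OF arrow_path_props(1)[OF fq alpha_arr]] H[OF u_path]
    unfolding Der0_def by simp
  also have "\<dots> = sm (F (arrow_path Q \<alpha>)) (\<nu> (\<phi>_arrow \<alpha>))"
    unfolding nu_phi_arrow_alpha Fu sm by (simp add: mult.commute)
  finally show ?thesis using True by simp
qed (use H[OF arrow_path_props(1)[OF fq b]] nu_phi_arrow in simp)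

text \<open>\<mu> and \<nu> differ only on \<alpha>, by a multiple of the value of u, and F gives u the
  same weight as \<alpha>.\<close>
lemma Der0_scales_mu_iff_nu:
  assumes D: "D \<in> Der0 Q eA sm"
    and F_Cons: "\<And>x b bs. is_path Q (x, b # bs) \<Longrightarrow>
      F (x, b # bs) = F (arrow_path Q b) + F (tgt Q b, bs)"
    and Fu: "F u = F (arrow_path Q \<alpha>)"
  shows "(\<forall>p. is_path Q p \<longrightarrow> D (\<mu> (bp p)) = sm (F p) (\<mu> (bp p))) \<longleftrightarrow>
         (\<forall>p. is_path Q p \<longrightarrow> D (\<nu> (bp p)) = sm (F p) (\<nu> (bp p)))"
proof
  assume H: "\<forall>p. is_path Q p \<longrightarrow> D (\<mu> (bp p)) = sm (F p) (\<mu> (bp p))"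
  have vertex: "D (\<nu> (bp (x, []))) = sm (F (x, [])) (\<nu> (bp (x, [])))" if "x \<in> verts Q" for x
    using H[rule_format, of "(x, [])"] mu_vertex[OF that] that by simp
  note paths = Der0_scales_paths[OF fq D kal nu_Cons vertex
      nu_arrow_scaled_if_mu_scaled[OF D Fu H[rule_format]] F_Cons]
  show "\<forall>p. is_path Q p \<longrightarrow> D (\<nu> (bp p)) = sm (F p) (\<nu> (bp p))"
    by (rule paths)
next
  assume H: "\<forall>p. is_path Q p \<longrightarrow> D (\<nu> (bp p)) = sm (F p) (\<nu> (bp p))"
  have vertex: "D (\<mu> (bp (x, []))) = sm (F (x, [])) (\<mu> (bp (x, [])))" if "x \<in> verts Q" for x
    using H[rule_format, of "(x, [])"] mu_vertex[OF that] that by simp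
  note paths = Der0_scales_paths[OF fq D kal mu_Cons vertex
      mu_arrow_scaled_if_nu_scaled[OF D Fu H[rule_format]] F_Cons]
  show "\<forall>p. is_path Q p \<longrightarrow> D (\<mu> (bp p)) = sm (F p) (\<mu> (bp p))"
    using paths by simp
qed

end

section \<open>The fundamental group and \<theta>\<close>

lemma wclass_eq: "wrel Q K w v \<Longrightarrow> wclass Q K w = wclass Q K v"
  unfolding wclass_def by (auto intro: wrel_trans wrel_sym)

lemma pi1_carrier:
  "is_walk Q w \<Longrightarrow> fst w = x0 \<Longrightarrow> wend Q w = x0 \<Longrightarrow> wclass Q K w \<in> carrier (pi1 Q K x0)"
  unfolding pi1_def by auto

lemma pi1_mult:
  assumes par: "wrel_parallel Q K"
    and w: "is_walk Q w" "fst w = x0" "wend Q w = x0"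
    and v: "is_walk Q v" "fst v = x0" "wend Q v = x0"
  shows "wclass Q K w \<otimes>\<^bsub>pi1 Q K x0\<^esub> wclass Q K v = wclass Q K (wconc w v)"
proof -
  have "{z. \<exists>w'\<in>wclass Q K w. \<exists>v'\<in>wclass Q K v. wrel Q K (wconc w' v') z} = wclass Q K (wconc w v)"
  proof (intro equalityI subsetI)
    fix z assume "z \<in> {z. \<exists>w'\<in>wclass Q K w. \<exists>v'\<in>wclass Q K v. wrel Q K (wconc w' v') z}"
    then obtain w' v' where w': "wrel Q K w w'" and v': "wrel Q K v v'"
      and z: "wrel Q K (wconc w' v') z"
      unfolding wclass_def by blast
    have "wend Q w' = fst v'" using wrel_parallelD[OF par w'] wrel_parallelD[OF par v'] w v by auto
    then have "wrel Q K (wconc w v) (wconc w' v')" using wrel_conc[OF w' v'] w v by simp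
    then show "z \<in> wclass Q K (wconc w v)" using z unfolding wclass_def by (auto intro: wrel_trans)
  next
    fix z assume "z \<in> wclass Q K (wconc w v)"
    moreover have "w \<in> wclass Q K w" "v \<in> wclass Q K v"
      using w v unfolding wclass_def by (auto intro: wrel_refl)
    ultimately show "z \<in> {z. \<exists>w'\<in>wclass Q K w. \<exists>v'\<in>wclass Q K v. wrel Q K (wconc w' v') z}"
      unfolding wclass_def by blast
  qed
  then show ?thesis unfolding pi1_def by simp
qed

lemma hom_kplus_mult:
  "f \<in> hom G kplus \<Longrightarrow> a \<in> carrier G \<Longrightarrow> b \<in> carrier G \<Longrightarrow> f (a \<otimes>\<^bsub>G\<^esub> b) = f a + f b"
  unfolding hom_def kplus_def by simp

lemma pmap_wclass:
  assumes finer: "wrel Q I \<le> wrel Q J" and w: "is_walk Q w"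
  shows "pmap Q J (wclass Q I w) = wclass Q J w"
proof (intro equalityI subsetI)
  fix z assume "z \<in> pmap Q J (wclass Q I w)"
  then obtain w' where "wrel Q I w w'" "wrel Q J w' z" unfolding pmap_def wclass_def by blast
  then show "z \<in> wclass Q J w" unfolding wclass_def using predicate2D[OF finer] wrel_trans by blast
next
  fix z assume "z \<in> wclass Q J w"
  moreover have "w \<in> wclass Q I w" unfolding wclass_def using wrel_refl[OF w] by simp
  ultimately show "z \<in> pmap Q J (wclass Q I w)" unfolding pmap_def wclass_def by blast
qed

lemma hom_comp_pmap:
  assumes finer: "wrel Q I \<le> wrel Q J"
    and parI: "wrel_parallel Q I" and parJ: "wrel_parallel Q J"
    and f: "f \<in> hom (pi1 Q J x0) kplus"
  shows "f \<circ> pmap Q J \<in> hom (pi1 Q I x0) kplus"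
proof -
  have "f (pmap Q J (C \<otimes>\<^bsub>pi1 Q I x0\<^esub> D)) = f (pmap Q J C) + f (pmap Q J D)"
    if C: "C \<in> carrier (pi1 Q I x0)" and D: "D \<in> carrier (pi1 Q I x0)" for C D
  proof -
    obtain w where w: "C = wclass Q I w" "is_walk Q w" "fst w = x0" "wend Q w = x0"
      using C unfolding pi1_def by auto
    obtain v where v: "D = wclass Q I v" "is_walk Q v" "fst v = x0" "wend Q v = x0"
      using D unfolding pi1_def by auto
    have "is_walk Q (wconc w v)" using w v by (intro is_walk_wconc) simp_all
    then have "f (pmap Q J (C \<otimes>\<^bsub>pi1 Q I x0\<^esub> D)) = f (wclass Q J (wconc w v))"
      using pi1_mult[OF parI w(2-4) v(2-4)] pmap_wclass[OF finer] unfolding w(1) v(1) by simp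
    also have "\<dots> = f (wclass Q J w \<otimes>\<^bsub>pi1 Q J x0\<^esub> wclass Q J v)"
      by (simp only: pi1_mult[OF parJ w(2-4) v(2-4)])
    also have "\<dots> = f (wclass Q J w) + f (wclass Q J v)"
      by (rule hom_kplus_mult[OF f pi1_carrier[OF w(2-4)] pi1_carrier[OF v(2-4)]])
    finally show ?thesis using pmap_wclass[OF finer] w v by simp
  qed
  then show ?thesis unfolding hom_def kplus_def by auto
qed

definition tree_loop ::
    "('v, 'e) quiver \<Rightarrow> ('v \<Rightarrow> 'v \<times> ('e \<times> bool) list) \<Rightarrow> 'v \<times> 'e list \<Rightarrow> 'v \<times> ('e \<times> bool) list"
  where "tree_loop Q \<gamma> p = wconc (wconc (\<gamma> (fst p)) (pwalk p)) (winv Q (\<gamma> (pend Q p)))"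

lemma tree_walks_walk:
  assumes "tree_walks Q x0 \<gamma>" "x \<in> verts Q"
  shows "is_walk Q (\<gamma> x) \<and> fst (\<gamma> x) = x0 \<and> wend Q (\<gamma> x) = x"
proof -
  obtain T where T: "spanning_tree Q T"
    and "\<forall>x\<in>verts Q. is_walk_in Q T (\<gamma> x) \<and> fst (\<gamma> x) = x0 \<and> wend Q (\<gamma> x) = x"
    using assms(1) unfolding tree_walks_def by blast
  then have "is_walk_in Q T (\<gamma> x)" "fst (\<gamma> x) = x0" "wend Q (\<gamma> x) = x" using assms(2) by auto
  moreover have "T \<subseteq> arrs Q" using T unfolding spanning_tree_def by blast
  ultimately show ?thesis
    using walk_chain_mono unfolding is_walk_in_def is_walk_def by auto
qed

context
  fixes Q :: "('v, 'e) quiver" and x0 :: 'v and \<gamma> :: "'v \<Rightarrow> 'v \<times> ('e \<times> bool) list"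
  assumes fq: "finite_quiver Q" and tw: "tree_walks Q x0 \<gamma>"
begin

lemma tree_loop_closed:
  assumes p: "is_path Q p"
  shows "is_walk Q (tree_loop Q \<gamma> p) \<and> fst (tree_loop Q \<gamma> p) = x0 \<and> wend Q (tree_loop Q \<gamma> p) = x0"
proof -
  have "fst p \<in> verts Q" "pend Q p \<in> verts Q"
    using p pend_in_verts[OF fq p] unfolding is_path_iff by auto
  note g = tree_walks_walk[OF tw this(1)] tree_walks_walk[OF tw this(2)]
  have "is_walk Q (wconc (\<gamma> (fst p)) (pwalk p))"
    using g is_walk_pwalk[OF p] by (intro is_walk_wconc) auto
  moreover have "wend Q (wconc (\<gamma> (fst p)) (pwalk p)) = pend Q p"
    using g by (simp add: wend_wconc wend_pwalk)
  ultimately show ?thesis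
    using is_walk_winv[OF fq, of "\<gamma> (pend Q p)"] g unfolding tree_loop_def
    by (auto intro!: is_walk_wconc simp: wend_wconc)
qed

text \<open>The loop of x, b \<dots> splits after b by inserting the cancelling detour back to x0
  along \<gamma> (tgt b) and out again.\<close>
lemma wrel_tree_loop_Cons:
  assumes p: "is_path Q (x, b # bs)"
  shows "wrel Q K (wconc (tree_loop Q \<gamma> (arrow_path Q b)) (tree_loop Q \<gamma> (tgt Q b, bs)))
    (tree_loop Q \<gamma> (x, b # bs))"
proof -
  have b: "b \<in> arrs Q" "src Q b = x" and r: "is_path Q (tgt Q b, bs)"
    using p is_path_Cons[OF fq] by auto
  define y where "y = tgt Q b"
  define z where "z = pend Q (tgt Q b, bs)"
  define A where "A = wconc (\<gamma> x) (pwalk (arrow_path Q b))"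
  define M where "M = wconc (winv Q (\<gamma> y)) (\<gamma> y)"
  define B where "B = wconc (pwalk (tgt Q b, bs)) (winv Q (\<gamma> z))"
  have "x \<in> verts Q" "y \<in> verts Q" "z \<in> verts Q"
    using p r pend_in_verts[OF fq r] unfolding is_path_iff y_def z_def by auto
  note gx = tree_walks_walk[OF tw this(1)] and gy = tree_walks_walk[OF tw this(2)]
    and gz = tree_walks_walk[OF tw this(3)]
  note a = arrow_path_props[OF fq b(1)]
  have A: "is_walk Q A" "wend Q A = y"
    unfolding A_def y_def using gx a b is_walk_pwalk[OF a(1)]
    by (auto intro: is_walk_wconc simp: wend_wconc wend_pwalk)
  have M: "wrel Q K M (y, [])" "fst M = y" "wend Q M = y"
    unfolding M_def using wrel_winv_wconc[OF fq, of "\<gamma> y" K] gy is_walk_winv[OF fq, of "\<gamma> y"]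
    by (auto simp: wend_wconc)
  have B: "is_walk Q B" "fst B = y"
    unfolding B_def y_def using is_walk_pwalk[OF r] is_walk_winv[OF fq, of "\<gamma> z"] gz
    by (auto intro: is_walk_wconc simp: wend_pwalk z_def)
  have "wrel Q K (wconc A M) A"
    by (rule wrel_concI[OF wrel_refl[OF A(1)] M(1)]) (use A M in auto)
  then have "wrel Q K (wconc (wconc A M) B) (wconc A B)"
    by (rule wrel_concI[OF _ wrel_refl[OF B(1)]]) (use A M B in \<open>auto simp: wend_wconc\<close>)
  moreover have "wconc (tree_loop Q \<gamma> (arrow_path Q b)) (tree_loop Q \<gamma> (tgt Q b, bs)) = wconc (wconc A M) B"
    unfolding tree_loop_def A_def M_def B_def y_def z_def using a b by (simp add: wconc_def)
  moreover have "wconc A B = tree_loop Q \<gamma> (x, b # bs)"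
    unfolding tree_loop_def A_def B_def z_def using b by (simp add: wconc_def pwalk_def arrow_path_def)
  ultimately show ?thesis by simp
qed

lemma wrel_tree_loop:
  assumes p: "is_path Q p" and q: "fst q = fst p" "pend Q q = pend Q p"
    and pq: "wrel Q K (pwalk p) (pwalk q)"
  shows "wrel Q K (tree_loop Q \<gamma> p) (tree_loop Q \<gamma> q)"
proof -
  have "fst p \<in> verts Q" "pend Q p \<in> verts Q"
    using p pend_in_verts[OF fq p] unfolding is_path_iff by auto
  note g = tree_walks_walk[OF tw this(1)] is_walk_winv[OF fq conjunct1[OF tree_walks_walk[OF tw this(2)]]]
    tree_walks_walk[OF tw this(2)]
  have "wrel Q K (wconc (\<gamma> (fst p)) (pwalk p)) (wconc (\<gamma> (fst p)) (pwalk q))"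
    by (rule wrel_concI[OF wrel_refl pq]) (simp_all add: g q)
  then show ?thesis
    unfolding tree_loop_def q
    by (rule wrel_concI[OF _ wrel_refl]) (simp_all add: g q wend_wconc wend_pwalk)
qed

lemma hom_tree_loop_Cons:
  assumes par: "wrel_parallel Q K"
    and f: "f \<in> hom (pi1 Q K x0) kplus" and p: "is_path Q (x, b # bs)"
  shows "f (wclass Q K (tree_loop Q \<gamma> (x, b # bs))) =
    f (wclass Q K (tree_loop Q \<gamma> (arrow_path Q b))) + f (wclass Q K (tree_loop Q \<gamma> (tgt Q b, bs)))"
proof -
  have "b \<in> arrs Q" and r: "is_path Q (tgt Q b, bs)" using p is_path_Cons[OF fq] by auto
  then have "is_path Q (arrow_path Q b)" using arrow_path_props[OF fq] by blast
  note l1 = tree_loop_closed[OF this] and l2 = tree_loop_closed[OF r]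
  have "wclass Q K (tree_loop Q \<gamma> (x, b # bs)) =
      wclass Q K (wconc (tree_loop Q \<gamma> (arrow_path Q b)) (tree_loop Q \<gamma> (tgt Q b, bs)))"
    by (rule sym[OF wclass_eq[OF wrel_tree_loop_Cons[OF p]]])
  also have "\<dots> = wclass Q K (tree_loop Q \<gamma> (arrow_path Q b)) \<otimes>\<^bsub>pi1 Q K x0\<^esub>
      wclass Q K (tree_loop Q \<gamma> (tgt Q b, bs))"
    using l1 l2 by (intro sym[OF pi1_mult[OF par]]) auto
  also have "f \<dots> = f (wclass Q K (tree_loop Q \<gamma> (arrow_path Q b))) +
      f (wclass Q K (tree_loop Q \<gamma> (tgt Q b, bs)))"
    using l1 l2 by (intro hom_kplus_mult[OF f] pi1_carrier) auto
  finally show ?thesis .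
qed

end

context transvected_presentation
begin

context
  fixes x0 :: 'v and \<gamma> :: "'v \<Rightarrow> 'v \<times> ('e \<times> bool) list"
  assumes alpha_sim_u: "wrel Q J (pwalk (arrow_path Q \<alpha>)) (pwalk u)" and tw: "tree_walks Q x0 \<gamma>"
begin

lemma ftilde_mu_iff_nu:
  assumes f: "f \<in> hom (pi1 Q J x0) kplus"
  shows "ftilde Q eA sm \<mu> x0 \<gamma> f D \<longleftrightarrow> ftilde Q eA sm \<nu> x0 \<gamma> (f \<circ> pmap Q J) D"
proof -
  define F where "F p = f (wclass Q J (tree_loop Q \<gamma> p))" for p
  have "(f \<circ> pmap Q J) (wclass Q I (tree_loop Q \<gamma> p)) = F p" if "is_path Q p" for p
    using pmap_wclass[OF wrel_I_le_wrel_J[OF alpha_sim_u]] tree_loop_closed[OF fq tw that]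
    unfolding F_def by simp
  then have "ftilde Q eA sm \<nu> x0 \<gamma> (f \<circ> pmap Q J) D \<longleftrightarrow>
      D \<in> Der0 Q eA sm \<and> (\<forall>p. is_path Q p \<longrightarrow> D (\<nu> (bp p)) = sm (F p) (\<nu> (bp p)))"
    unfolding ftilde_def tree_loop_def[symmetric] by auto
  moreover have "ftilde Q eA sm \<mu> x0 \<gamma> f D \<longleftrightarrow>
      D \<in> Der0 Q eA sm \<and> (\<forall>p. is_path Q p \<longrightarrow> D (\<mu> (bp p)) = sm (F p) (\<mu> (bp p)))"
    unfolding ftilde_def F_def tree_loop_def by simp
  moreover have "F (x, b # bs) = F (arrow_path Q b) + F (tgt Q b, bs)" if "is_path Q (x, b # bs)"
    for x b bs
    unfolding F_def by (rule hom_tree_loop_Cons[OF fq tw wrel_parallel_J f that])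
  moreover have "F u = F (arrow_path Q \<alpha>)"
    using wclass_eq[OF wrel_tree_loop[OF fq tw arrow_path_props(1)[OF fq alpha_arr] _ _ alpha_sim_u]]
      arrow_path_props[OF fq alpha_arr] u_fst u_pend
    unfolding F_def by simp
  ultimately show ?thesis using Der0_scales_mu_iff_nu by blast
qed

lemma theta_mu_eq:
  "f \<in> hom (pi1 Q J x0) kplus \<Longrightarrow> theta Q eA sm \<mu> x0 \<gamma> f = theta Q eA sm \<nu> x0 \<gamma> (f \<circ> pmap Q J)"
  unfolding theta_def using ftilde_mu_iff_nu by simp

end

end

theorem proposition3p2:
  fixes Q :: "('v, 'e) quiver" and eA :: "'v \<Rightarrow> 'a::ring_1" and sm :: "'k::field \<Rightarrow> 'a \<Rightarrow> 'a"
    and \<nu> :: "('v \<times> 'e list \<Rightarrow> 'k) \<Rightarrow> 'a" and \<alpha> :: 'e and u :: "'v \<times> 'e list" and \<tau> :: 'k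
    and x0 :: 'v and \<gamma> :: "'v \<Rightarrow> 'v \<times> ('e \<times> bool) list"
  defines "\<mu> \<equiv> \<nu> \<circ> transv Q \<alpha> u \<tau>"
  defines "I \<equiv> kerP Q \<nu>"
  defines "J \<equiv> kerP Q \<mu>"
  assumes "alg_closed TYPE('k)"
    and "k_algebra sm"
    and "finite_quiver Q" and "quiver_connected Q" and "no_oriented_cycles Q"
    and "presentation Q eA sm \<nu>"
    and "bypass Q \<alpha> u"
    and "x0 \<in> verts Q" and "tree_walks Q x0 \<gamma>"
    and "wrel Q J (pwalk (arrow_path Q \<alpha>)) (pwalk u)"
  shows "(\<forall>f \<in> hom (pi1 Q J x0) kplus.
            theta Q eA sm \<mu> x0 \<gamma> f = theta Q eA sm \<nu> x0 \<gamma> (f \<circ> pmap Q J))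
       \<and> theta Q eA sm \<mu> x0 \<gamma> ` hom (pi1 Q J x0) kplus
           \<subseteq> theta Q eA sm \<nu> x0 \<gamma> ` hom (pi1 Q I x0) kplus"
proof -
  interpret transvected_presentation Q \<alpha> u \<tau> eA sm \<nu>
    by unfold_locales (fact assms)+
  note \<alpha>_sim_u = \<open>wrel Q J (pwalk (arrow_path Q \<alpha>)) (pwalk u)\<close>[unfolded J_def \<mu>_def]
  have "theta Q eA sm \<mu> x0 \<gamma> f = theta Q eA sm \<nu> x0 \<gamma> (f \<circ> pmap Q J)"
    and "f \<circ> pmap Q J \<in> hom (pi1 Q I x0) kplus"
    if "f \<in> hom (pi1 Q J x0) kplus" for f
    using that theta_mu_eq[OF \<alpha>_sim_u \<open>tree_walks Q x0 \<gamma>\<close>]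
      hom_comp_pmap[OF wrel_I_le_wrel_J[OF \<alpha>_sim_u] wrel_parallel_I wrel_parallel_J]
    unfolding I_def J_def \<mu>_def by blast+
  then show ?thesis by blast
qed

end
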